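(* Consider system (SICMR) with all parameters positive, on the set $\Omega$. 1. If $\mathcal{R}_0\le 1$, the disease-free equilibrium $E_0=(\alpha/\mu,0,0,0,0)$ is globally asymptotically stable in $\Omega$; if $\mathcal{R}_0>1$, $E_0$ is unstable. 2. If $p<m+d+\mu$ and $1<\mathcal{R}_0<1+\frac{\varepsilon bc}{a\mu}$, then $E_1$ is unstable. 3. If $p<m+d+\mu$, $\mathcal{R}_0>1$ and $\mathcal{R}_0\ge 1+\frac{\varepsilon bc}{a\mu}$, then $E_1$ is locally asymptotically stable and every solution starting in $\Omega$ with $I(0)>0$ converges to $E_1$. 4. If $p>m+d+\mu$ and $1<\mathcal{R}_0\le 1+\frac{\varepsilon bc}{a\mu}$, then $E_1$ is locally asymptotically stable and every solution starting in $\Omega$ with $I(0)>0$ converges to $E_1$. 5. If $p>m+d+\mu$ and $\mathcal{R}_0>1+\frac{\varepsilon bc}{a\mu}$, then $E_1$ is unstable.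
   Context: System (SICMR) is the ODE system in $(S,I,C,M,R)$: $S'=\alpha-cSI-\mu S$, $I'=cSI-\frac{pC}{\varepsilon+I+aM}I-\gamma I-\mu I$, $C'=\frac{pC}{\varepsilon+I+aM}I-mC-dC-\mu C$, $M'=mC-qM-\mu M$, $R'=qM+\gamma I-\mu R$, where $\alpha,c,\mu,p,\varepsilon,a,\gamma,m,d,q$ are positive constants. $\Omega=\{(S,I,C,M,R)\in\mathbb{R}_{\ge0}^5: S+I+C+M+R\le \alpha/\mu\}$ (positively invariant for the system). The basic reproduction number is $\mathcal{R}_0=\frac{c\alpha}{\mu(\mu+\gamma)}$, and $b=\frac{a(m+d+\mu)}{p-m-d-\mu}$ (for $p\ne m+d+\mu$). For $\mathcal{R}_0>1$, $E_1=\left(\frac{\mu+\gamma}{c},\frac{\mu}{c}(\mathcal{R}_0-1),0,0,\frac{\gamma}{c}(\mathcal{R}_0-1)\right)$ is the boundary equilibrium. "Globally asymptotically stable in a set $X$" means locally asymptotically stable and attracting every solution with initial value in $X$. *)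

theory Defs
  imports "HOL-Analysis.Analysis"
begin

text \<open>States are vectors in R^5 with components (S, I, C, M, R) = (x$1, x$2, x$3, x$4, x$5).\<close>

definition mk5 :: "real \<Rightarrow> real \<Rightarrow> real \<Rightarrow> real \<Rightarrow> real \<Rightarrow> real^5" where
  "mk5 s i c m r = (\<chi> k. if k = 1 then s else if k = 2 then i else if k = 3 then c
                         else if k = 4 then m else r)"

definition sicmr :: "real \<Rightarrow> real \<Rightarrow> real \<Rightarrow> real \<Rightarrow> real \<Rightarrow> real \<Rightarrow> real \<Rightarrow> real \<Rightarrow> real \<Rightarrow> real
                      \<Rightarrow> real^5 \<Rightarrow> real^5" where
  "sicmr \<alpha> c \<mu> p \<epsilon> a \<gamma> m d q x =
     (let S = x$1; I = x$2; C = x$3; M = x$4; R = x$5 in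
      mk5 (\<alpha> - c*S*I - \<mu>*S)
          (c*S*I - (p*C/(\<epsilon> + I + a*M))*I - \<gamma>*I - \<mu>*I)
          ((p*C/(\<epsilon> + I + a*M))*I - m*C - d*C - \<mu>*C)
          (m*C - q*M - \<mu>*M)
          (q*M + \<gamma>*I - \<mu>*R))"

definition Omega :: "real \<Rightarrow> real \<Rightarrow> (real^5) set" where
  "Omega \<alpha> \<mu> = {x. (\<forall>k. 0 \<le> x$k) \<and> x$1 + x$2 + x$3 + x$4 + x$5 \<le> \<alpha>/\<mu>}"

definition R0 :: "real \<Rightarrow> real \<Rightarrow> real \<Rightarrow> real \<Rightarrow> real" where
  "R0 \<alpha> c \<mu> \<gamma> = c*\<alpha>/(\<mu>*(\<mu>+\<gamma>))"

definition bb :: "real \<Rightarrow> real \<Rightarrow> real \<Rightarrow> real \<Rightarrow> real \<Rightarrow> real" where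
  "bb a m d \<mu> p = a*(m+d+\<mu>)/(p-m-d-\<mu>)"

definition E0 :: "real \<Rightarrow> real \<Rightarrow> real^5" where
  "E0 \<alpha> \<mu> = mk5 (\<alpha>/\<mu>) 0 0 0 0"

definition E1 :: "real \<Rightarrow> real \<Rightarrow> real \<Rightarrow> real \<Rightarrow> real^5" where
  "E1 \<alpha> c \<mu> \<gamma> = mk5 ((\<mu>+\<gamma>)/c) (\<mu>/c*(R0 \<alpha> c \<mu> \<gamma> - 1)) 0 0 (\<gamma>/c*(R0 \<alpha> c \<mu> \<gamma> - 1))"

definition is_solution :: "('a::real_normed_vector \<Rightarrow> 'a) \<Rightarrow> (real \<Rightarrow> 'a) \<Rightarrow> bool" where
  "is_solution f x \<longleftrightarrow> (\<forall>t\<ge>0. (x has_vector_derivative f (x t)) (at t within {0..}))"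

definition stable_in :: "('a::real_normed_vector \<Rightarrow> 'a) \<Rightarrow> 'a set \<Rightarrow> 'a \<Rightarrow> bool" where
  "stable_in f X e \<longleftrightarrow>
     (\<forall>\<epsilon>>0. \<exists>\<delta>>0. \<forall>x. is_solution f x \<and> x 0 \<in> X \<and> dist (x 0) e < \<delta>
                     \<longrightarrow> (\<forall>t\<ge>0. dist (x t) e < \<epsilon>))"

definition unstable_in :: "('a::real_normed_vector \<Rightarrow> 'a) \<Rightarrow> 'a set \<Rightarrow> 'a \<Rightarrow> bool" where
  "unstable_in f X e \<longleftrightarrow> \<not> stable_in f X e"

definition locally_asymptotically_stable_in :: "('a::real_normed_vector \<Rightarrow> 'a) \<Rightarrow> 'a set \<Rightarrow> 'a \<Rightarrow> bool" where
  "locally_asymptotically_stable_in f X e \<longleftrightarrow> stable_in f X e \<and>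
     (\<exists>\<delta>>0. \<forall>x. is_solution f x \<and> x 0 \<in> X \<and> dist (x 0) e < \<delta> \<longrightarrow> (x \<longlongrightarrow> e) at_top)"

definition globally_asymptotically_stable_in :: "('a::real_normed_vector \<Rightarrow> 'a) \<Rightarrow> 'a set \<Rightarrow> 'a \<Rightarrow> bool" where
  "globally_asymptotically_stable_in f X e \<longleftrightarrow> locally_asymptotically_stable_in f X e \<and>
     (\<forall>x. is_solution f x \<and> x 0 \<in> X \<longrightarrow> (x \<longlongrightarrow> e) at_top)"

end

(*
  Solutions starting in \<Omega> stay there, and they exist because outside \<Omega> the field can be
  replaced by a bounded, globally Lipschitz one (Picard iteration).

  Stability and attraction come from Volterra-type Lyapunov functions
  V = (S - s ln S) + (I - i ln I) + \<theta> C centred at an equilibrium (s, i): V decreases along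
  solutions, which gives stability, and LaSalle's argument (via Barbalat's lemma) forces
  S \<rightarrow> s; the equations then give I \<rightarrow> i and C \<rightarrow> 0, and M, R follow from their linear
  equations. With i = 0 and \<theta> = 1 this works at E0 when R0 \<le> 1. At E1 = (S1, I1, 0, 0, R1) a
  suitable \<theta> exists when p < m + d + \<mu>, or when p > m + d + \<mu> and
  I1 \<le> \<epsilon>(m + d + \<mu>)/(p - m - d - \<mu>), which is the condition R0 \<le> 1 + \<epsilon>bc/(a\<mu>).

  Instability: near E0 with R0 > 1 the I-component, and near E1 in case 5 the C-component,
  grows exponentially as long as the solution stays close. In case 2 the hypotheses are
  contradictory, since b < 0 when p < m + d + \<mu>.
*)

theory Submission
  imports Defs "HOL-Real_Asymp.Real_Asymp"
begin

lemma exhaust_5: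
  fixes x :: 5
  shows "x = 1 \<or> x = 2 \<or> x = 3 \<or> x = 4 \<or> x = 5"
proof (induct x)
  case (of_int z)
  then have "z = 0 \<or> z = 1 \<or> z = 2 \<or> z = 3 \<or> z = 4" by fastforce
  then show ?case by auto
qed

lemma forall_5: "(\<forall>i::5. P i) \<longleftrightarrow> P 1 \<and> P 2 \<and> P 3 \<and> P 4 \<and> P 5"
  by (metis exhaust_5)

lemma mk5_nth [simp]:
  "mk5 s i c m r $ 1 = s" "mk5 s i c m r $ 2 = i" "mk5 s i c m r $ 3 = c"
  "mk5 s i c m r $ 4 = m" "mk5 s i c m r $ 5 = r"
  by (simp_all add: mk5_def)

lemma norm_le_l1_5: "norm (x::real^5) \<le> \<bar>x$1\<bar> + \<bar>x$2\<bar> + \<bar>x$3\<bar> + \<bar>x$4\<bar> + \<bar>x$5\<bar>"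
proof -
  have U: "UNIV = {1, 2, 3, 4, 5::5}" using exhaust_5 by auto
  have "(\<Sum>i\<in>UNIV. \<bar>x$i\<bar>) = \<bar>x$1\<bar> + \<bar>x$2\<bar> + \<bar>x$3\<bar> + \<bar>x$4\<bar> + \<bar>x$5\<bar>"
    unfolding U by (simp add: add.assoc)
  then show ?thesis using norm_le_l1_cart[of x] by simp
qed

lemma dist_mk5_le:
  "dist (mk5 s1 s2 s3 s4 s5) (mk5 u1 u2 u3 u4 u5)
     \<le> \<bar>s1 - u1\<bar> + \<bar>s2 - u2\<bar> + \<bar>s3 - u3\<bar> + \<bar>s4 - u4\<bar> + \<bar>s5 - u5\<bar>"
  using norm_le_l1_5[of "mk5 s1 s2 s3 s4 s5 - mk5 u1 u2 u3 u4 u5"] by (simp add: dist_norm)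

lemma abs_nth_diff_le_dist: "\<bar>u $ i - w $ i\<bar> \<le> dist u (w :: real^'n)"
  using dist_vec_nth_le[of u i w] by (simp add: dist_real_def)

lemma tendsto_vec5:
  assumes "((\<lambda>t. x t $ 1) \<longlongrightarrow> e $ 1) F" "((\<lambda>t. x t $ 2) \<longlongrightarrow> e $ 2) F"
    "((\<lambda>t. x t $ 3) \<longlongrightarrow> e $ 3) F" "((\<lambda>t. x t $ 4) \<longlongrightarrow> e $ 4) F"
    "((\<lambda>t. x t $ 5) \<longlongrightarrow> e $ 5) F"
  shows "(x \<longlongrightarrow> (e::real^5)) F"
proof (rule vec_tendstoI)
  fix i :: 5 show "((\<lambda>t. x t $ i) \<longlongrightarrow> e $ i) F" using exhaust_5[of i] assms by auto
qed

lemma has_real_derivative_nth: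
  "(x has_vector_derivative v) F \<Longrightarrow> ((\<lambda>t. x t $ i) has_real_derivative v $ i) F"
  unfolding has_real_derivative_iff_has_vector_derivative
  by (rule bounded_linear.has_vector_derivative[OF bounded_linear_vec_nth])

lemma uniformly_continuous_on_subset:
  fixes g :: "'a::metric_space \<Rightarrow> 'b::metric_space"
  shows "uniformly_continuous_on S g \<Longrightarrow> T \<subseteq> S \<Longrightarrow> uniformly_continuous_on T g"
  unfolding uniformly_continuous_on_def by (meson subsetD)

section \<open>Scalar differential inequalities\<close>

lemma continuous_on_if_has_real_derivative:
  assumes "0 \<le> a" and d: "\<And>t. t \<in> {a..b} \<Longrightarrow> (y has_real_derivative y' t) (at t within {0..})"
  shows "continuous_on {a..b} y"
  unfolding continuous_on_eq_continuous_within
proof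
  fix t assume t: "t \<in> {a..b}"
  have "continuous (at t within {0..}) y" using d[OF t] by (rule DERIV_continuous)
  then show "continuous (at t within {a..b}) y"
    by (rule continuous_within_subset) (use \<open>0 \<le> a\<close> in auto)
qed

lemma le_if_derivative_nonneg:
  fixes y y' :: "real \<Rightarrow> real"
  assumes "0 \<le> a" "a \<le> b"
    and d: "\<And>t. t \<in> {a..b} \<Longrightarrow> (y has_real_derivative y' t) (at t within {0..})"
    and nonneg: "\<And>t. a < t \<Longrightarrow> t < b \<Longrightarrow> y' t \<ge> 0"
  shows "y a \<le> y b"
proof (rule DERIV_nonneg_imp_increasing_open[OF \<open>a \<le> b\<close>])
  fix t assume t: "a < t" "t < b"
  have "(y has_real_derivative y' t) (at t within {0<..})"
    by (rule DERIV_subset[OF d]) (use t in auto)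
  then have "(y has_real_derivative y' t) (at t)"
    using at_within_open[of t "{0<..}"] t \<open>0 \<le> a\<close> by auto
  then show "\<exists>y''. (y has_real_derivative y'') (at t) \<and> y'' \<ge> 0" using nonneg[OF t] by blast
next
  show "continuous_on {a..b} y" by (rule continuous_on_if_has_real_derivative[OF \<open>0 \<le> a\<close> d])
qed

lemma increment_ge_if_derivative_ge:
  fixes h h' :: "real \<Rightarrow> real"
  assumes "0 \<le> a" "a \<le> b"
    and d: "\<And>t. t \<in> {a..b} \<Longrightarrow> (h has_real_derivative h' t) (at t within {0..})"
    and ge: "\<And>t. a < t \<Longrightarrow> t < b \<Longrightarrow> h' t \<ge> k"
  shows "h b - h a \<ge> k * (b - a)"
proof -
  have "h a - k * a \<le> h b - k * b"
    by (rule le_if_derivative_nonneg[of a b _ "\<lambda>t. h' t - k"])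
      (use assms in \<open>auto intro!: derivative_eq_intros\<close>)
  then show ?thesis by (simp add: algebra_simps)
qed

text \<open>The comparison lemmas below apply \<open>le_if_derivative_nonneg\<close> to \<open>y\<close> times an
  exponential integrating factor.\<close>

lemma nonneg_if_derivative_ge_when_negative:
  fixes y y' :: "real \<Rightarrow> real"
  assumes "0 \<le> a"
    and d: "\<And>t. t \<in> {a..b} \<Longrightarrow> (y has_real_derivative y' t) (at t within {0..})"
    and y0: "y a \<ge> 0"
    and K: "\<And>t. t \<in> {a..b} \<Longrightarrow> y t < 0 \<Longrightarrow> y' t \<ge> K * y t"
    and t: "t \<in> {a..b}"
  shows "y t \<ge> 0"
proof (rule ccontr)
  assume neg: "\<not> y t \<ge> 0"
  have cont: "continuous_on {a..t} y"
    using t by (intro continuous_on_if_has_real_derivative[of a t y y'] \<open>0 \<le> a\<close>) (use d t in auto)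
  let ?A = "{a..t} \<inter> y -` {0..}"
  have "compact ?A"
    using continuous_closed_preimage[OF cont] bounded_subset[of "{a..t}" ?A]
    by (simp add: compact_eq_bounded_closed)
  moreover have "a \<in> ?A" using y0 t by auto
  ultimately obtain s where s: "s \<in> ?A" "\<forall>u\<in>?A. u \<le> s" using compact_attains_sup by blast
  have "s < t" using s neg by (cases "s = t") auto
  have neg_after: "y u < 0" if "s < u" "u \<le> t" for u
  proof (rule ccontr)
    assume "\<not> y u < 0"
    then have "u \<in> ?A" using that s(1) by auto
    then show False using s(2) that by force
  qed
  define z where "z u = y u * exp (-K*u)" for u
  have "z s \<le> z t"
  proof (rule le_if_derivative_nonneg[of s t z "\<lambda>u. (y' u - K*y u)*exp(-K*u)"])
    fix u assume u: "u \<in> {s..t}"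
    then have "u \<in> {a..b}" using s t by auto
    from d[OF this] show "(z has_real_derivative (y' u - K*y u)*exp(-K*u)) (at u within {0..})"
      unfolding z_def by (auto intro!: derivative_eq_intros simp: algebra_simps)
  next
    fix u assume u: "s < u" "u < t"
    then have "u \<in> {a..b}" using s t by auto
    with K[OF this] neg_after[of u] u show "0 \<le> (y' u - K*y u) * exp (-K*u)" by auto
  qed (use s \<open>s < t\<close> \<open>0 \<le> a\<close> in auto)
  moreover have "z s \<ge> 0" using s unfolding z_def by auto
  moreover have "z t < 0" using neg unfolding z_def by (simp add: mult_neg_pos)
  ultimately show False by simp
qed

lemma exp_lower_bound_if_derivative_ge:
  fixes y y' :: "real \<Rightarrow> real"
  assumes "0 \<le> a" and d: "\<And>t. t \<ge> a \<Longrightarrow> (y has_real_derivative y' t) (at t within {0..})"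
    and ge: "\<And>t. t \<ge> a \<Longrightarrow> y' t \<ge> k * y t" and "t \<ge> a"
  shows "y t \<ge> y a * exp (k*(t-a))"
proof -
  define z where "z u = y u * exp (-k*u)" for u
  have "z a \<le> z t"
  proof (rule le_if_derivative_nonneg[of a t z "\<lambda>u. (y' u - k*y u)*exp(-k*u)"])
    fix u assume u: "u \<in> {a..t}"
    from d[of u] u show "(z has_real_derivative (y' u - k*y u)*exp(-k*u)) (at u within {0..})"
      unfolding z_def by (auto intro!: derivative_eq_intros simp: algebra_simps)
  next
    fix u assume u: "a < u" "u < t"
    with ge[of u] show "0 \<le> (y' u - k*y u) * exp (-k*u)" by auto
  qed (use assms in auto)
  then have "y a * exp (-k*a) * exp (k*t) \<le> y t * exp (-k*t) * exp (k*t)"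
    unfolding z_def by (intro mult_right_mono) auto
  then show ?thesis by (simp add: mult.assoc flip: exp_add) (simp add: algebra_simps)
qed

lemma exceeds_if_exponential_growth:
  fixes y y' :: "real \<Rightarrow> real"
  assumes d: "\<And>t. t \<ge> 0 \<Longrightarrow> (y has_real_derivative y' t) (at t within {0..})"
    and ge: "\<And>t. t \<ge> 0 \<Longrightarrow> y' t \<ge> \<kappa> * y t" and \<kappa>: "\<kappa> > 0" and y0: "y 0 > 0"
  shows "\<exists>t\<ge>0. y t > B"
proof -
  define t where "t = \<bar>B\<bar> / (y 0 * \<kappa>)"
  have t0: "t \<ge> 0" unfolding t_def using \<kappa> y0 by simp
  have "y t \<ge> y 0 * exp (\<kappa> * (t - 0))"
    by (rule exp_lower_bound_if_derivative_ge[of 0 y y']) (use d ge t0 in auto)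
  moreover have "y 0 * exp (\<kappa> * t) \<ge> y 0 * (1 + \<kappa> * t)"
    using y0 exp_ge_add_one_self[of "\<kappa> * t"] by (intro mult_left_mono) auto
  moreover have "y 0 * (1 + \<kappa> * t) = y 0 + \<bar>B\<bar>" unfolding t_def using y0 \<kappa> by (simp add: field_simps)
  ultimately show ?thesis using t0 y0 by (intro exI[of _ t]) auto
qed

lemma upper_bound_if_derivative_le_linear:
  fixes y y' :: "real \<Rightarrow> real"
  assumes "0 \<le> a" and d: "\<And>t. t \<ge> a \<Longrightarrow> (y has_real_derivative y' t) (at t within {0..})"
    and \<beta>: "\<beta> > 0" and le: "\<And>t. t \<ge> a \<Longrightarrow> y' t \<le> A - \<beta> * y t" and "t \<ge> a"
  shows "y t \<le> A/\<beta> + (y a - A/\<beta>) * exp (-\<beta>*(t-a))"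
proof -
  define z where "z u = (A/\<beta> - y u) * exp (\<beta>*u)" for u
  have "z a \<le> z t"
  proof (rule le_if_derivative_nonneg[of a t z "\<lambda>u. (A - \<beta>*y u - y' u)*exp(\<beta>*u)"])
    fix u assume u: "u \<in> {a..t}"
    from d[of u] u \<beta> show "(z has_real_derivative (A - \<beta>*y u - y' u)*exp(\<beta>*u)) (at u within {0..})"
      unfolding z_def by (auto intro!: derivative_eq_intros simp: algebra_simps)
  next
    fix u assume u: "a < u" "u < t"
    with le[of u] show "0 \<le> (A - \<beta>*y u - y' u) * exp (\<beta>*u)" by auto
  qed (use assms in auto)
  then have "(A/\<beta> - y a) * exp (\<beta>*a) * exp (-\<beta>*t) \<le> (A/\<beta> - y t) * exp (\<beta>*t) * exp (-\<beta>*t)"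
    unfolding z_def by (intro mult_right_mono) auto
  then have "(A/\<beta> - y a) * exp (-\<beta>*(t-a)) \<le> A/\<beta> - y t"
    by (simp add: mult.assoc flip: exp_add) (simp add: algebra_simps)
  then show ?thesis by (simp add: algebra_simps)
qed

lemma lower_bound_if_derivative_ge_linear:
  fixes y y' :: "real \<Rightarrow> real"
  assumes "0 \<le> a" and d: "\<And>t. t \<ge> a \<Longrightarrow> (y has_real_derivative y' t) (at t within {0..})"
    and \<beta>: "\<beta> > 0" and ge: "\<And>t. t \<ge> a \<Longrightarrow> y' t \<ge> A - \<beta> * y t" and "t \<ge> a"
  shows "y t \<ge> A/\<beta> + (y a - A/\<beta>) * exp (-\<beta>*(t-a))"
proof -
  have "- y t \<le> (-A)/\<beta> + (- y a - (-A)/\<beta>) * exp (-\<beta>*(t-a))"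
    by (rule upper_bound_if_derivative_le_linear[of a "\<lambda>t. - y t" "\<lambda>t. - y' t"])
      (use assms in \<open>auto intro!: derivative_eq_intros simp: algebra_simps\<close>)
  then show ?thesis by (simp add: algebra_simps)
qed

lemma le_max_if_derivative_le_linear:
  fixes y y' :: "real \<Rightarrow> real"
  assumes "0 \<le> a" and d: "\<And>t. t \<ge> a \<Longrightarrow> (y has_real_derivative y' t) (at t within {0..})"
    and \<beta>: "\<beta> > 0" and le: "\<And>t. t \<ge> a \<Longrightarrow> y' t \<le> A - \<beta> * y t" and "t \<ge> a"
  shows "y t \<le> max (y a) (A/\<beta>)"
proof -
  have e: "exp (-\<beta>*(t-a)) \<le> 1" "exp (-\<beta>*(t-a)) > 0" using \<beta> \<open>t \<ge> a\<close> by auto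
  have "y t \<le> A/\<beta> + (y a - A/\<beta>) * exp (-\<beta>*(t-a))"
    by (rule upper_bound_if_derivative_le_linear[OF assms])
  moreover have "(y a - A/\<beta>) * exp (-\<beta>*(t-a)) \<le> max 0 (y a - A/\<beta>)"
    using e by (cases "y a - A/\<beta> \<ge> 0") (auto intro: mult_left_le mult_nonpos_nonneg)
  ultimately show ?thesis by auto
qed

lemma ge_min_if_derivative_ge_linear:
  fixes y y' :: "real \<Rightarrow> real"
  assumes "0 \<le> a" and d: "\<And>t. t \<ge> a \<Longrightarrow> (y has_real_derivative y' t) (at t within {0..})"
    and \<beta>: "\<beta> > 0" and ge: "\<And>t. t \<ge> a \<Longrightarrow> y' t \<ge> A - \<beta> * y t" and "t \<ge> a"
  shows "y t \<ge> min (y a) (A/\<beta>)"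
proof -
  have "- y t \<le> max (- y a) ((-A)/\<beta>)"
    by (rule le_max_if_derivative_le_linear[of a "\<lambda>t. - y t" "\<lambda>t. - y' t"])
      (use assms in \<open>auto intro!: derivative_eq_intros simp: algebra_simps\<close>)
  then show ?thesis by auto
qed

lemma tendsto_if_derivative_eq_linear:
  fixes y y' g :: "real \<Rightarrow> real"
  assumes "0 \<le> a" and d: "\<And>t. t \<ge> a \<Longrightarrow> (y has_real_derivative y' t) (at t within {0..})"
    and \<beta>: "\<beta> > 0" and eq: "\<And>t. t \<ge> a \<Longrightarrow> y' t = g t - \<beta> * y t"
    and g: "(g \<longlongrightarrow> L) at_top"
  shows "(y \<longlongrightarrow> L/\<beta>) at_top"
proof (rule tendstoI)
  fix \<eta> :: real assume \<eta>: "\<eta> > 0"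
  define \<eta>1 where "\<eta>1 = \<eta>*\<beta>/2"
  have "\<eta>1 > 0" using \<eta> \<beta> by (simp add: \<eta>1_def)
  then obtain T0 where T0: "\<And>t. t \<ge> T0 \<Longrightarrow> dist (g t) L < \<eta>1"
    using tendstoD[OF g] by (auto simp: eventually_at_top_linorder)
  define T where "T = max T0 a"
  have g_near: "g t \<le> L + \<eta>1" "g t \<ge> L - \<eta>1" if "t \<ge> T" for t
    using T0[of t] that by (auto simp: T_def dist_real_def abs_less_iff)
  have up: "y t \<le> (L+\<eta>1)/\<beta> + (y T - (L+\<eta>1)/\<beta>) * exp (-\<beta>*(t-T))" if "t \<ge> T" for t
    by (rule upper_bound_if_derivative_le_linear[of T y y'])
      (use that \<open>0 \<le> a\<close> d \<beta> eq g_near in \<open>auto simp: T_def\<close>)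
  have lo: "y t \<ge> (L-\<eta>1)/\<beta> + (y T - (L-\<eta>1)/\<beta>) * exp (-\<beta>*(t-T))" if "t \<ge> T" for t
    by (rule lower_bound_if_derivative_ge_linear[of T y y'])
      (use that \<open>0 \<le> a\<close> d \<beta> eq g_near in \<open>auto simp: T_def\<close>)
  have decay: "((\<lambda>t. D * exp (-\<beta>*(t-T))) \<longlongrightarrow> 0) at_top" for D
    using \<beta> by real_asymp
  have q1: "(L+\<eta>1)/\<beta> = L/\<beta> + \<eta>/2" and q2: "(L-\<eta>1)/\<beta> = L/\<beta> - \<eta>/2"
    using \<beta> by (simp_all add: \<eta>1_def field_simps)
  have "\<eta>/2 > 0" using \<eta> by simp
  show "eventually (\<lambda>t. dist (y t) (L/\<beta>) < \<eta>) at_top"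
    using tendstoD[OF decay[of "y T - (L+\<eta>1)/\<beta>"] \<open>\<eta>/2 > 0\<close>]
      tendstoD[OF decay[of "y T - (L-\<eta>1)/\<beta>"] \<open>\<eta>/2 > 0\<close>] eventually_ge_at_top[of T]
  proof eventually_elim
    case (elim t)
    define X1 where "X1 = (y T - (L+\<eta>1)/\<beta>) * exp (-\<beta>*(t-T))"
    define X2 where "X2 = (y T - (L-\<eta>1)/\<beta>) * exp (-\<beta>*(t-T))"
    have "\<bar>X1\<bar> < \<eta>/2" "\<bar>X2\<bar> < \<eta>/2"
      using elim(1,2) unfolding X1_def X2_def by (simp_all add: dist_real_def)
    moreover have "y t \<le> L/\<beta> + \<eta>/2 + X1" "y t \<ge> L/\<beta> - \<eta>/2 + X2"
      using up[OF elim(3)] lo[OF elim(3)] unfolding X1_def X2_def q1 q2 by auto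
    ultimately show ?case unfolding dist_real_def abs_less_iff by linarith
  qed
qed

lemma antimono_bounded_below_tendsto:
  fixes h :: "real \<Rightarrow> real"
  assumes mono: "\<And>s t. a \<le> s \<Longrightarrow> s \<le> t \<Longrightarrow> h t \<le> h s" and lb: "\<And>t. t \<ge> a \<Longrightarrow> h t \<ge> b"
  shows "\<exists>l. (h \<longlongrightarrow> l) at_top"
proof -
  define l where "l = Inf (h ` {a..})"
  have bdd: "bdd_below (h ` {a..})" using lb by (auto simp: bdd_below_def)
  have "(h \<longlongrightarrow> l) at_top"
  proof (rule tendstoI)
    fix e :: real assume e: "e > 0"
    then obtain t1 where t1: "t1 \<ge> a" "h t1 < l + e"
      using cInf_lessD[of "h ` {a..}" "l + e"] unfolding l_def by auto
    have "dist (h t) l < e" if "t \<ge> t1" for t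
      using cInf_lower[OF _ bdd, of "h t"] mono[of t1 t] that t1 by (auto simp: l_def dist_real_def)
    then show "eventually (\<lambda>t. dist (h t) l < e) at_top"
      unfolding eventually_at_top_linorder by blast
  qed
  then show ?thesis by blast
qed

lemma derivative_tendsto_0_if_uniformly_continuous:
  fixes h h' :: "real \<Rightarrow> real"
  assumes "0 \<le> a" and d: "\<And>t. t \<ge> a \<Longrightarrow> (h has_real_derivative h' t) (at t within {0..})"
    and conv: "(h \<longlongrightarrow> l) at_top" and uc: "uniformly_continuous_on {a..} h'"
  shows "(h' \<longlongrightarrow> 0) at_top"
proof (rule tendstoI)
  fix \<eta> :: real assume \<eta>: "\<eta> > 0"
  obtain \<delta> where \<delta>: "\<delta> > 0"
    "\<And>u v. u \<in> {a..} \<Longrightarrow> v \<in> {a..} \<Longrightarrow> dist u v < \<delta> \<Longrightarrow> dist (h' u) (h' v) < \<eta>/2"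
    using uc \<eta> unfolding uniformly_continuous_on_def by (metis half_gt_zero)
  obtain T0 where T0: "\<And>t. t \<ge> T0 \<Longrightarrow> \<bar>h t - l\<bar> < \<eta>*\<delta>/8"
    using tendstoD[OF conv, of "\<eta>*\<delta>/8"] \<eta> \<delta>
    by (auto simp: eventually_at_top_linorder dist_real_def)
  have "\<bar>h' t\<bar> < \<eta>" if t: "t \<ge> max a T0" for t
  proof (rule ccontr)
    let ?t2 = "t + \<delta>/2"
    have close: "\<bar>h' u - h' t\<bar> < \<eta>/2" if "u \<in> {t..?t2}" for u
      using \<delta>(2)[of u t] that t \<delta>(1) by (auto simp: dist_real_def)
    have "\<bar>h t - l\<bar> < \<eta>*\<delta>/8" "\<bar>h ?t2 - l\<bar> < \<eta>*\<delta>/8"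
      using T0[of t] T0[of ?t2] t \<delta> by auto
    then have small: "\<bar>h ?t2 - h t\<bar> < \<eta>*\<delta>/4"
      unfolding abs_less_iff by linarith
    have slope: "g ?t2 - g t \<ge> \<eta>/2 * (?t2 - t)"
      if "\<And>u. u \<ge> a \<Longrightarrow> (g has_real_derivative g' u) (at u within {0..})" "g' t \<ge> \<eta>"
        "\<And>u. u \<in> {t..?t2} \<Longrightarrow> \<bar>g' u - g' t\<bar> < \<eta>/2" for g g'
    proof (rule increment_ge_if_derivative_ge)
      fix u assume "t < u" "u < ?t2"
      then have "\<bar>g' u - g' t\<bar> < \<eta>/2" using that(3)[of u] by simp
      then show "g' u \<ge> \<eta>/2" using that(2) unfolding abs_less_iff by linarith
    qed (use that(1) t \<open>0 \<le> a\<close> \<delta> in auto)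
    assume "\<not> \<bar>h' t\<bar> < \<eta>"
    then consider "h' t \<ge> \<eta>" | "- h' t \<ge> \<eta>" by linarith
    then show False
    proof cases
      case 1
      have "h ?t2 - h t \<ge> \<eta>/2 * (?t2 - t)" using slope[of h h'] d 1 close by blast
      then show False using small unfolding abs_less_iff by simp
    next
      case 2
      have "((\<lambda>u. - h u) has_real_derivative - h' u) (at u within {0..})" if "u \<ge> a" for u
        using d[OF that] by (rule DERIV_minus)
      then have "h t - h ?t2 \<ge> \<eta>/2 * (?t2 - t)"
        using slope[of "\<lambda>u. - h u" "\<lambda>u. - h' u"] 2 close by (force simp: abs_minus_commute)
      then show False using small unfolding abs_less_iff by simp
    qed
  qed
  then show "eventually (\<lambda>t. dist (h' t) 0 < \<eta>) at_top"
    unfolding eventually_at_top_linorder by (intro exI[of _ "max a T0"]) auto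
qed

lemma tendsto_if_square_diff_tendsto_0:
  fixes g :: "'a \<Rightarrow> real"
  assumes "((\<lambda>t. (g t - l)^2) \<longlongrightarrow> 0) F" shows "(g \<longlongrightarrow> l) F"
proof -
  have "((\<lambda>t. sqrt ((g t - l)^2)) \<longlongrightarrow> sqrt 0) F" by (intro tendsto_intros assms)
  then have "((\<lambda>t. g t - l) \<longlongrightarrow> 0) F" by (simp add: tendsto_rabs_zero_iff)
  then show ?thesis by (simp add: LIM_zero_iff)
qed

lemma stays_in_closed_if_locally:
  fixes x :: "real \<Rightarrow> 'a::metric_space"
  assumes cont: "continuous_on {0..} x" and cl: "closed X" and x0: "x 0 \<in> X"
    and local: "\<And>t1. t1 \<ge> 0 \<Longrightarrow> (\<forall>u\<in>{0..t1}. x u \<in> X) \<Longrightarrow> \<exists>\<eta>>0. \<forall>u\<in>{t1..t1+\<eta>}. x u \<in> X"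
    and t: "t \<ge> 0"
  shows "x t \<in> X"
proof (rule ccontr)
  assume bad: "x t \<notin> X"
  define A where "A = {u. u \<ge> 0 \<and> x u \<notin> X}"
  define t1 where "t1 = Inf A"
  have tA: "t \<in> A" using bad t by (auto simp: A_def)
  have bdd: "bdd_below A" by (auto simp: A_def bdd_below_def)
  have t1_nonneg: "t1 \<ge> 0" unfolding t1_def using tA by (intro cInf_greatest) (auto simp: A_def)
  have before: "x u \<in> X" if "0 \<le> u" "u < t1" for u
    using cInf_lower[OF _ bdd, of u] that unfolding t1_def A_def by force
  have at_t1: "x t1 \<in> X"
  proof (cases "t1 = 0")
    case True then show ?thesis using x0 by simp
  next
    case False
    then have pos: "t1 > 0" using t1_nonneg by simp
    have "continuous (at t1 within {0..}) x"
      using cont t1_nonneg by (simp add: continuous_on_eq_continuous_within)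
    then have "(x \<longlongrightarrow> x t1) (at t1 within {0..t1})"
      unfolding continuous_within by (rule tendsto_within_subset) auto
    then have lim: "(x \<longlongrightarrow> x t1) (at_left t1)" using at_within_Icc_at_left[OF pos] by simp
    have "eventually (\<lambda>u. x u \<in> X) (at_left t1)"
      using eventually_at_left_real[OF pos] by eventually_elim (auto intro: before)
    then show ?thesis by (rule Lim_in_closed_set[OF cl _ _ lim]) simp
  qed
  obtain \<eta> where \<eta>: "\<eta> > 0" "\<forall>u\<in>{t1..t1+\<eta>}. x u \<in> X"
    using local[OF t1_nonneg] before at_t1 by (force simp: le_less)
  obtain u where u: "u \<in> A" "u < t1 + \<eta>"
    using cInf_lessD[of A "t1+\<eta>"] tA \<eta>(1) unfolding t1_def by auto
  have "t1 \<le> u" unfolding t1_def by (rule cInf_lower[OF u(1) bdd])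
  with u \<eta>(2) show False by (auto simp: A_def)
qed

section \<open>Global solutions by Picard iteration\<close>

lemma integral_0_monomial:
  assumes t: "t \<ge> 0"
  shows "integral {0..t} (\<lambda>s::real. C * s^n) = C * t^(Suc n) / Suc n"
proof -
  have "((\<lambda>s. C * s^n) has_integral (C * t^Suc n / Suc n - C * 0^Suc n / Suc n)) {0..t}"
  proof (rule fundamental_theorem_of_calculus[OF t])
    fix s :: real assume "s \<in> {0..t}"
    have "((\<lambda>s. C * s^Suc n / Suc n) has_real_derivative C * (real (Suc n) * s^n) / Suc n) (at s within {0..t})"
      by (intro DERIV_cdivide DERIV_cmult) (use DERIV_pow[of "Suc n" s "{0..t}"] in simp)
    then have "((\<lambda>s. C * s^Suc n / Suc n) has_real_derivative C * s^n) (at s within {0..t})"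
      by simp
    then show "((\<lambda>s. C * s^Suc n / Suc n) has_vector_derivative C * s^n) (at s within {0..t})"
      by (simp add: has_real_derivative_iff_has_vector_derivative)
  qed
  from integral_unique[OF this] show ?thesis by simp
qed

locale picard_iteration =
  fixes F :: "'a::euclidean_space \<Rightarrow> 'a" and L B :: real and x0 :: 'a
  assumes lipschitz: "\<And>x y. norm (F x - F y) \<le> L * norm (x - y)"
    and bounded: "\<And>x. norm (F x) \<le> B" and L_pos: "L > 0"
begin

lemma B_nonneg: "B \<ge> 0"
  using bounded[of x0] norm_ge_zero[of "F x0"] by linarith

primrec iter :: "nat \<Rightarrow> real \<Rightarrow> 'a" where
  "iter 0 t = x0"
| "iter (Suc n) t = x0 + integral {0..t} (\<lambda>s. F (iter n s))"

lemma continuous_on_F: "continuous_on S F"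
proof -
  have "L-lipschitz_on UNIV F" using lipschitz L_pos by (intro lipschitz_onI) (auto simp: dist_norm)
  then show ?thesis using lipschitz_on_continuous_on continuous_on_subset by blast
qed

lemma continuous_on_iter: "continuous_on {0..T} (iter n)"
proof (induction n arbitrary: T)
  case 0 then show ?case by simp
next
  case (Suc n)
  have c: "continuous_on {0..T} (\<lambda>s. F (iter n s))"
    by (rule continuous_on_compose2[OF continuous_on_F Suc.IH]) auto
  have "continuous_on {0..T} (\<lambda>u. integral {0..u} (\<lambda>s. F (iter n s)))"
    unfolding continuous_on_eq_continuous_within
    using integral_has_vector_derivative[OF c] has_vector_derivative_continuous by blast
  moreover have "iter (Suc n) = (\<lambda>u. x0 + integral {0..u} (\<lambda>s. F (iter n s)))" by auto
  ultimately show ?case by (auto intro: continuous_intros)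
qed

lemma integrable_F_iter: "(\<lambda>s. F (iter n s)) integrable_on {0..t}"
  by (rule integrable_continuous_interval, rule continuous_on_compose2[OF continuous_on_F continuous_on_iter]) auto

lemma iter_negative: "t < 0 \<Longrightarrow> iter n t = x0"
  by (cases n) auto

lemma norm_iter_Suc_diff_le:
  "t \<ge> 0 \<Longrightarrow> norm (iter (Suc n) t - iter n t) \<le> B * L^n * t^(Suc n) / fact (Suc n)"
proof (induction n arbitrary: t)
  case 0
  then show ?case using mult_left_mono[OF bounded[of x0] 0] by (simp add: mult.commute)
next
  case (Suc n)
  have "iter (Suc (Suc n)) t - iter (Suc n) t
      = integral {0..t} (\<lambda>s. F (iter (Suc n) s)) - integral {0..t} (\<lambda>s. F (iter n s))"
    by simp
  also have "\<dots> = integral {0..t} (\<lambda>s. F (iter (Suc n) s) - F (iter n s))"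
    by (rule Henstock_Kurzweil_Integration.integral_diff[symmetric]) (rule integrable_F_iter)+
  finally have eq: "iter (Suc (Suc n)) t - iter (Suc n) t = integral {0..t} (\<lambda>s. F (iter (Suc n) s) - F (iter n s))" .
  have "norm (integral {0..t} (\<lambda>s. F (iter (Suc n) s) - F (iter n s)))
      \<le> integral {0..t} (\<lambda>s. (L * (B * L^n / fact (Suc n))) * s^(Suc n))"
  proof (rule Henstock_Kurzweil_Integration.integral_norm_bound_integral)
    show "(\<lambda>s. F (iter (Suc n) s) - F (iter n s)) integrable_on {0..t}"
      by (intro integrable_diff integrable_F_iter)
    show "(\<lambda>s. (L * (B * L^n / fact (Suc n))) * s^(Suc n)) integrable_on {0..t}"
      by (rule integrable_continuous_interval) (auto intro!: continuous_intros)
    fix s assume s: "s \<in> {0..t}"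
    have "norm (F (iter (Suc n) s) - F (iter n s)) \<le> L * norm (iter (Suc n) s - iter n s)"
      by (rule lipschitz)
    also have "\<dots> \<le> L * (B * L^n * s^(Suc n) / fact (Suc n))"
      using Suc.IH[of s] s L_pos by (intro mult_left_mono) auto
    finally show "norm (F (iter (Suc n) s) - F (iter n s)) \<le> (L * (B * L^n / fact (Suc n))) * s^(Suc n)"
      by (simp add: field_simps)
  qed
  also have "\<dots> = (L * (B * L^n / fact (Suc n))) * t^(Suc (Suc n)) / Suc (Suc n)"
    by (rule integral_0_monomial[OF Suc.prems])
  also have "\<dots> = B * L^(Suc n) * t^(Suc (Suc n)) / fact (Suc (Suc n))"
    by (simp add: field_simps)
  finally show ?case unfolding eq .
qed

definition step_bound :: "real \<Rightarrow> nat \<Rightarrow> real"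
  where "step_bound T n = B * T * ((L*T)^n / fact n)"

definition tail_bound :: "real \<Rightarrow> nat \<Rightarrow> real"
  where "tail_bound T n = (\<Sum>i. step_bound T (i + n))"

lemma step_bound_nonneg: "T \<ge> 0 \<Longrightarrow> step_bound T n \<ge> 0"
  unfolding step_bound_def using B_nonneg L_pos by auto

lemma summable_step_bound: "summable (step_bound T)"
  using summable_mult[OF summable_exp[of "L*T"], of "B*T"]
  unfolding step_bound_def by (simp add: field_simps)

lemma tail_bound_tendsto_0: "tail_bound T \<longlonglongrightarrow> 0"
proof (rule tendstoI)
  fix e :: real assume "e > 0"
  from suminf_exist_split[OF this summable_step_bound] show "eventually (\<lambda>n. dist (tail_bound T n) 0 < e) sequentially"
    unfolding eventually_sequentially tail_bound_def by auto
qed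

lemma norm_iter_Suc_diff_le_step_bound:
  assumes "0 \<le> t" "t \<le> T"
  shows "norm (iter (Suc n) t - iter n t) \<le> step_bound T n"
proof -
  have le: "B * L^n * t^(Suc n) \<le> B * L^n * T^(Suc n)"
    using assms B_nonneg L_pos by (intro mult_left_mono power_mono) auto
  have "B * L^n * t^(Suc n) / fact (Suc n) \<le> B * L^n * T^(Suc n) / fact n"
    by (rule frac_le[OF _ le]) (use B_nonneg L_pos assms in \<open>auto intro!: mult_nonneg_nonneg fact_mono\<close>)
  also have "\<dots> = step_bound T n" by (simp add: step_bound_def power_mult_distrib field_simps)
  finally show ?thesis using norm_iter_Suc_diff_le[OF assms(1), of n] by linarith
qed

lemma norm_iter_diff_le_tail_bound:
  assumes "0 \<le> t" "t \<le> T"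
  shows "norm (iter (n + j) t - iter n t) \<le> tail_bound T n"
proof -
  have "norm (iter (n + j) t - iter n t) \<le> (\<Sum>i<j. step_bound T (i + n))"
  proof (induction j)
    case (Suc j)
    have "norm (iter (n + Suc j) t - iter n t)
        \<le> norm (iter (Suc (n + j)) t - iter (n + j) t) + norm (iter (n + j) t - iter n t)"
      using norm_triangle_ineq[of "iter (Suc (n + j)) t - iter (n + j) t" "iter (n + j) t - iter n t"]
      by simp
    also have "\<dots> \<le> step_bound T (j + n) + (\<Sum>i<j. step_bound T (i + n))"
      using norm_iter_Suc_diff_le_step_bound[OF assms, of "n + j"] Suc.IH by (simp add: add.commute)
    finally show ?case by simp
  qed simp
  also have "\<dots> \<le> tail_bound T n" unfolding tail_bound_def
    using summable_step_bound[of T] step_bound_nonneg assms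
    by (intro sum_le_suminf) (auto simp: summable_iff_shift)
  finally show ?thesis .
qed

lemma convergent_iter: "convergent (\<lambda>n. iter n t)"
proof (cases "t < 0")
  case True then show ?thesis using iter_negative[OF True] by (simp add: convergent_const)
next
  case False
  then have t: "0 \<le> t" by simp
  have "Cauchy (\<lambda>n. iter n t)"
  proof (rule metric_CauchyI)
    fix e :: real assume "e > 0"
    then obtain N where "\<forall>n\<ge>N. dist (tail_bound t n) 0 < e"
      using tail_bound_tendsto_0[of t] unfolding lim_sequentially by blast
    then have N: "\<And>n. n \<ge> N \<Longrightarrow> tail_bound t n < e" by (auto simp: dist_real_def)
    have ordered: "dist (iter m t) (iter n t) < e" if "m \<ge> N" "n \<ge> N" "m \<le> n" for m n
    proof -
      obtain j where "n = m + j" using \<open>m \<le> n\<close> le_Suc_ex by blast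
      then have "dist (iter m t) (iter n t) \<le> tail_bound t m"
        using norm_iter_diff_le_tail_bound[OF t order.refl, of m j] by (simp add: dist_norm norm_minus_commute)
      then show ?thesis using N[OF \<open>m \<ge> N\<close>] by simp
    qed
    have "dist (iter m t) (iter n t) < e" if "m \<ge> N" "n \<ge> N" for m n
      using that ordered[of m n] ordered[of n m] by (cases "m \<le> n") (auto simp: dist_commute)
    then show "\<exists>M. \<forall>m\<ge>M. \<forall>n\<ge>M. dist (iter m t) (iter n t) < e" by blast
  qed
  then show ?thesis by (simp add: Cauchy_convergent_iff)
qed

definition sol :: "real \<Rightarrow> 'a" where "sol t = lim (\<lambda>n. iter n t)"

lemma iter_tendsto_sol: "(\<lambda>n. iter n t) \<longlonglongrightarrow> sol t"
  unfolding sol_def using convergent_iter convergent_LIMSEQ_iff by blast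

lemma norm_sol_diff_le_tail_bound:
  assumes "0 \<le> t" "t \<le> T"
  shows "norm (sol t - iter n t) \<le> tail_bound T n"
proof -
  have "(\<lambda>j. norm (iter (j + n) t - iter n t)) \<longlonglongrightarrow> norm (sol t - iter n t)"
    by (intro tendsto_intros LIMSEQ_ignore_initial_segment iter_tendsto_sol)
  moreover have "\<forall>j\<ge>0. norm (iter (j + n) t - iter n t) \<le> tail_bound T n"
    using norm_iter_diff_le_tail_bound[OF assms, of n] by (simp add: add.commute)
  ultimately show ?thesis by (rule Lim_bounded)
qed

lemma sol_negative: "t < 0 \<Longrightarrow> sol t = x0"
  using iter_tendsto_sol[of t] iter_negative[of t] LIMSEQ_unique[OF _ tendsto_const] by auto

lemma norm_iter_diff_le:
  assumes "0 \<le> s" "s \<le> t"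
  shows "norm (iter n t - iter n s) \<le> B * (t - s)"
proof (cases n)
  case 0 then show ?thesis using B_nonneg assms by simp
next
  case (Suc k)
  have "integral {0..s} (\<lambda>u. F (iter k u)) + integral {s..t} (\<lambda>u. F (iter k u))
      = integral {0..t} (\<lambda>u. F (iter k u))"
    by (rule Henstock_Kurzweil_Integration.integral_combine) (use assms integrable_F_iter in auto)
  then have eq: "iter n t - iter n s = integral {s..t} (\<lambda>u. F (iter k u))"
    using Suc by (simp add: algebra_simps)
  have "(\<lambda>u. F (iter k u)) integrable_on cbox s t"
    using integrable_on_subinterval[OF integrable_F_iter[of k t], of s t] assms by auto
  from integrable_bound[OF B_nonneg this bounded] show ?thesis unfolding eq using assms by simp
qed

lemma norm_sol_diff_le:
  assumes "0 \<le> s" "s \<le> t"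
  shows "norm (sol t - sol s) \<le> B * (t - s)"
proof -
  have "(\<lambda>n. norm (iter n t - iter n s)) \<longlonglongrightarrow> norm (sol t - sol s)"
    by (intro tendsto_intros iter_tendsto_sol)
  then show ?thesis using norm_iter_diff_le[OF assms] by (intro Lim_bounded[of _ _ 0]) auto
qed

lemma continuous_on_sol: "continuous_on {0..T} sol"
proof -
  have "(B+1)-lipschitz_on {0..T} sol"
  proof (rule lipschitz_onI)
    fix s t assume "s \<in> {0..T}" "t \<in> {0..T}"
    then have "dist (sol s) (sol t) \<le> B * \<bar>s - t\<bar>"
      using norm_sol_diff_le[of s t] norm_sol_diff_le[of t s]
      by (cases "s \<le> t") (auto simp: dist_norm norm_minus_commute)
    also have "\<dots> \<le> (B+1) * dist s t" by (simp add: dist_real_def mult_right_mono)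
    finally show "dist (sol s) (sol t) \<le> (B+1) * dist s t" .
  qed (use B_nonneg in simp)
  then show ?thesis by (rule lipschitz_on_continuous_on)
qed

lemma integrable_F_sol: "(\<lambda>s. F (sol s)) integrable_on {0..t}"
  by (rule integrable_continuous_interval, rule continuous_on_compose2[OF continuous_on_F continuous_on_sol]) auto

lemma sol_integral_equation: "sol t = x0 + integral {0..t} (\<lambda>s. F (sol s))"
proof (cases "t < 0")
  case True then show ?thesis using sol_negative by simp
next
  case False
  then have t: "t \<ge> 0" by simp
  let ?rhs = "x0 + integral {0..t} (\<lambda>s. F (sol s))"
  have bound: "norm (iter (Suc n) t - ?rhs) \<le> L * t * tail_bound t n" for n
  proof -
    have "norm (iter (Suc n) t - ?rhs) = norm (integral {0..t} (\<lambda>s. F (iter n s) - F (sol s)))"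
      by (simp add: Henstock_Kurzweil_Integration.integral_diff[OF integrable_F_iter integrable_F_sol])
    also have "\<dots> \<le> integral {0..t} (\<lambda>s. L * tail_bound t n)"
    proof (rule Henstock_Kurzweil_Integration.integral_norm_bound_integral)
      fix s assume s: "s \<in> {0..t}"
      have "norm (F (iter n s) - F (sol s)) \<le> L * norm (iter n s - sol s)" by (rule lipschitz)
      also have "\<dots> \<le> L * tail_bound t n"
        using norm_sol_diff_le_tail_bound[of s t n] s L_pos
        by (intro mult_left_mono) (auto simp: norm_minus_commute)
      finally show "norm (F (iter n s) - F (sol s)) \<le> L * tail_bound t n" .
    qed (auto intro: integrable_diff integrable_F_iter integrable_F_sol)
    also have "\<dots> = L * t * tail_bound t n" using t by simp
    finally show ?thesis .
  qed
  have "(\<lambda>n. L * t * tail_bound t n) \<longlonglongrightarrow> 0"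
    using tail_bound_tendsto_0[of t] by (auto intro: tendsto_mult_right_zero)
  then have "(\<lambda>n. iter (Suc n) t - ?rhs) \<longlonglongrightarrow> 0"
    by (rule Lim_null_comparison[rotated]) (use bound in auto)
  then have "(\<lambda>n. iter (Suc n) t - ?rhs + ?rhs) \<longlonglongrightarrow> 0 + ?rhs"
    by (intro tendsto_add tendsto_const)
  then have "(\<lambda>n. iter (Suc n) t) \<longlonglongrightarrow> ?rhs"
    by (simp only: diff_add_cancel add_0_left)
  moreover have "(\<lambda>n. iter (Suc n) t) \<longlonglongrightarrow> sol t"
    using iter_tendsto_sol LIMSEQ_Suc by blast
  ultimately show ?thesis using LIMSEQ_unique by blast
qed

lemma sol_has_vector_derivative:
  assumes t: "t \<ge> 0"
  shows "(sol has_vector_derivative F (sol t)) (at t within {0..})"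
proof -
  have c: "continuous_on {0..t+1} (\<lambda>s. F (sol s))"
    by (rule continuous_on_compose2[OF continuous_on_F continuous_on_sol]) auto
  have "((\<lambda>u. integral {0..u} (\<lambda>s. F (sol s))) has_vector_derivative F (sol t)) (at t within {0..t+1})"
    by (rule integral_has_vector_derivative[OF c]) (use t in auto)
  then have "((\<lambda>u. x0 + integral {0..u} (\<lambda>s. F (sol s))) has_vector_derivative F (sol t)) (at t within {0..t+1})"
    by (auto intro!: derivative_eq_intros)
  moreover have "(\<lambda>u. x0 + integral {0..u} (\<lambda>s. F (sol s))) = sol"
    by (rule ext) (rule sol_integral_equation[symmetric])
  moreover have "at t within {0..t+1} = at t within {0..}"
    by (rule at_within_nhd[of _ "{..<t+1}"]) auto
  ultimately show ?thesis by simp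
qed

end

lemma solution_exists_if_lipschitz_bounded:
  fixes F :: "'a::euclidean_space \<Rightarrow> 'a"
  assumes "\<And>x y. norm (F x - F y) \<le> L * norm (x - y)" and "\<And>x. norm (F x) \<le> B" and "L > 0"
  shows "\<exists>x. x 0 = x0 \<and> is_solution F x"
proof -
  interpret picard_iteration F L B x0 using assms by unfold_locales
  show ?thesis unfolding is_solution_def
    using sol_integral_equation[of 0] sol_has_vector_derivative by (intro exI[of _ sol]) auto
qed

section \<open>The Volterra function\<close>

text \<open>Because \<open>ln 0 = 0\<close> in Isabelle, \<open>volterra 0 x = x\<close>; this lets one Lyapunov function
  cover both equilibria, with \<open>i = 0\<close> at \<open>E0\<close>.\<close>

definition volterra :: "real \<Rightarrow> real \<Rightarrow> real"
  where "volterra s x = x - s * ln x - (s - s * ln s)"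

lemma volterra_zero [simp]: "volterra 0 x = x"
  by (simp add: volterra_def)

lemma volterra_self [simp]: "volterra s s = 0"
  by (simp add: volterra_def)

lemma volterra_nonneg:
  assumes "0 \<le> s" "0 < x \<or> s = 0" "0 \<le> x"
  shows "volterra s x \<ge> 0"
proof (cases "s = 0")
  case False
  then have "s > 0" "x > 0" using assms by auto
  then have "s * ln (x/s) \<le> s * (x/s - 1)" by (intro mult_left_mono ln_le_minus_one) auto
  then show ?thesis using \<open>s > 0\<close> \<open>x > 0\<close> by (simp add: volterra_def ln_div algebra_simps)
qed (use assms in simp)

lemma minus_one_minus_ln_ge_square:
  fixes u M :: real
  assumes u: "0 < u" "u \<le> M" and M: "1 \<le> M"
  shows "(u - 1)^2 / (2*M) \<le> u - 1 - ln u"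
proof -
  define g where "g v = v - 1 - ln v - (v - 1)^2 / (2*M)" for v
  define g' where "g' v = (v - 1) * (M - v) / (v * M)" for v
  have deriv: "(g has_real_derivative g' v) (at v within {0..})" if "v > 0" for v
  proof -
    have "(g has_real_derivative (1 - 1/v - 2*(v - 1)/(2*M))) (at v within {0..})"
      unfolding g_def using that M by (auto intro!: derivative_eq_intros simp: power2_eq_square field_simps)
    moreover have "1 - 1/v - 2*(v - 1)/(2*M) = g' v" unfolding g'_def using that M by (simp add: field_simps)
    ultimately show ?thesis by simp
  qed
  have "g 1 \<le> g u"
  proof (cases "u \<ge> 1")
    case True
    show ?thesis
      by (rule le_if_derivative_nonneg[of 1 u g g'])
        (use True deriv u M in \<open>auto simp: g'_def intro!: divide_nonneg_pos mult_nonneg_nonneg\<close>)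
  next
    case False
    have "- g u \<le> - g 1"
    proof (rule le_if_derivative_nonneg[of u 1 _ "\<lambda>v. - g' v"])
      fix v assume "v \<in> {u..1}"
      then show "((\<lambda>v. - g v) has_real_derivative - g' v) (at v within {0..})"
        using deriv u by (auto intro: derivative_intros)
    next
      fix v assume v: "u < v" "v < 1"
      then have "(1 - v) * (M - v) / (v * M) \<ge> 0" using u M by (intro divide_nonneg_pos) auto
      moreover have "- ((v - 1) * (M - v)) = (1 - v) * (M - v)" by (simp add: algebra_simps)
      ultimately show "0 \<le> - g' v" unfolding g'_def minus_divide_left by simp
    qed (use u False in auto)
    then show ?thesis by simp
  qed
  then show ?thesis by (simp add: g_def)
qed

lemma volterra_ge_square:
  assumes s: "0 \<le> s" and x: "0 \<le> x" "x \<le> X" "0 < x \<or> s = 0" and X: "0 < X"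
  shows "(x - s)^2 / (2 * max s X) \<le> volterra s x"
proof (cases "s = 0")
  case True
  have "x * x \<le> x * (2 * X)" using x X by (intro mult_left_mono) auto
  then show ?thesis using True X by (simp add: power2_eq_square divide_le_eq max_def)
next
  case False
  then have "s > 0" "x > 0" using s x by auto
  define M where "M = max 1 (X/s)"
  have "x/s \<le> X/s" using x \<open>s > 0\<close> by (intro divide_right_mono) auto
  then have M: "1 \<le> M" "x/s \<le> M" by (auto simp: M_def)
  have sM: "s * M = max s X" using \<open>s > 0\<close> by (simp add: M_def max_def field_simps)
  have "s * ((x/s - 1)^2 / (2*M)) \<le> s * (x/s - 1 - ln (x/s))"
    using minus_one_minus_ln_ge_square[of "x/s" M] M \<open>s > 0\<close> \<open>x > 0\<close> by (intro mult_left_mono) auto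
  moreover have "s * ((x/s - 1)^2 / (2*M)) = (x - s)^2 / (2 * max s X)"
    using \<open>s > 0\<close> M(1) sM[symmetric] by (simp add: field_simps power2_eq_square)
  moreover have "s * (x/s - 1 - ln (x/s)) = volterra s x"
    using \<open>s > 0\<close> \<open>x > 0\<close> by (simp add: volterra_def ln_div field_simps)
  ultimately show ?thesis by simp
qed

lemma exp_le_if_volterra_le:
  assumes "0 < s" "0 < x" "volterra s x \<le> B"
  shows "exp (- (B + s - s * ln s) / s) \<le> x"
proof -
  have "- (B + s - s * ln s) / s \<le> ln x"
    using assms by (simp add: volterra_def divide_le_eq algebra_simps)
  then have "exp (- (B + s - s * ln s) / s) \<le> exp (ln x)" by simp
  then show ?thesis using assms(2) by simp
qed

lemma has_real_derivative_volterra: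
  assumes "(y has_real_derivative y') (at t within S)" "0 < y t \<or> s = 0"
  shows "((\<lambda>t. volterra s (y t)) has_real_derivative (1 - s / y t) * y') (at t within S)"
proof (cases "s = 0")
  case False
  then show ?thesis using assms unfolding volterra_def
    by (auto intro!: derivative_eq_intros simp: field_simps)
qed (use assms in simp)

lemma continuous_at_volterra:
  assumes "0 < x \<or> s = 0"
  shows "isCont (volterra s) x"
proof -
  have "volterra s = (\<lambda>y. y - s * ln y - (s - s * ln s))" by (rule ext) (simp add: volterra_def)
  then show ?thesis using assms by (cases "s = 0") (auto intro!: continuous_intros)
qed

section \<open>The SICMR model\<close>

lemma abs_mult_diff_le:
  fixes a1 a2 b1 b2 A :: real
  assumes "\<bar>a1\<bar> \<le> A" "\<bar>b2\<bar> \<le> A" "\<bar>a1 - a2\<bar> \<le> \<delta>" "\<bar>b1 - b2\<bar> \<le> \<delta>"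
  shows "\<bar>a1*b1 - a2*b2\<bar> \<le> 2*A*\<delta>"
proof -
  have "a1*b1 - a2*b2 = a1*(b1 - b2) + b2*(a1 - a2)" by (simp add: algebra_simps)
  then have "\<bar>a1*b1 - a2*b2\<bar> \<le> \<bar>a1\<bar>*\<bar>b1 - b2\<bar> + \<bar>b2\<bar>*\<bar>a1 - a2\<bar>"
    by (simp add: abs_mult[symmetric] abs_triangle_ineq)
  also have "\<dots> \<le> A*\<delta> + A*\<delta>" using assms by (intro add_mono mult_mono) auto
  finally show ?thesis by simp
qed

lemma abs_saturation_diff_le:
  fixes u2 u3 u4 w2 w3 w4 A \<epsilon> a \<delta> :: real
  assumes bounds: "0 \<le> u2" "u2 \<le> A" "0 \<le> u3" "u3 \<le> A" "0 \<le> u4" "0 \<le> w2" "w2 \<le> A"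
      "0 \<le> w3" "w3 \<le> A" "0 \<le> w4"
    and close: "\<bar>u2 - w2\<bar> \<le> \<delta>" "\<bar>u3 - w3\<bar> \<le> \<delta>" "\<bar>u4 - w4\<bar> \<le> \<delta>"
    and pos: "\<epsilon> > 0" "a > 0"
  shows "\<bar>u3*u2/(\<epsilon>+u2+a*u4) - w3*w2/(\<epsilon>+w2+a*w4)\<bar> \<le> (2*A/\<epsilon> + A^2*(1+a)/\<epsilon>^2)*\<delta>"
proof -
  define Du where "Du = \<epsilon>+u2+a*u4"
  define Dw where "Dw = \<epsilon>+w2+a*w4"
  have Du: "Du \<ge> \<epsilon>" and Dw: "Dw \<ge> \<epsilon>" using bounds pos by (auto simp: Du_def Dw_def)
  have eq: "u3*u2/Du - w3*w2/Dw = (u3*u2 - w3*w2)/Du + w3*w2*(Dw - Du)/(Du*Dw)"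
    using Du Dw pos by (simp add: field_simps)
  have "\<bar>u3*u2 - w3*w2\<bar> \<le> 2*A*\<delta>" by (rule abs_mult_diff_le) (use bounds close in auto)
  then have t1: "\<bar>(u3*u2 - w3*w2)/Du\<bar> \<le> 2*A/\<epsilon>*\<delta>"
    using Du pos frac_le[of "2*A*\<delta>" "\<bar>u3*u2 - w3*w2\<bar>" \<epsilon> Du] by simp
  have "Dw - Du = (w2 - u2) + a * (w4 - u4)" unfolding Du_def Dw_def by (simp add: algebra_simps)
  then have "\<bar>Dw - Du\<bar> \<le> \<bar>w2 - u2\<bar> + \<bar>a * (w4 - u4)\<bar>" by (metis abs_triangle_ineq)
  also have "\<bar>a * (w4 - u4)\<bar> = a * \<bar>w4 - u4\<bar>" using pos by (simp add: abs_mult)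
  finally have "\<bar>Dw - Du\<bar> \<le> \<bar>w2 - u2\<bar> + a * \<bar>w4 - u4\<bar>" .
  also have "\<dots> \<le> \<delta> + a*\<delta>"
    using close pos by (intro add_mono mult_left_mono) (auto simp: abs_minus_commute)
  finally have "\<bar>Dw - Du\<bar> \<le> (1+a)*\<delta>" by (simp add: algebra_simps)
  then have "\<bar>w3*w2*(Dw - Du)\<bar> \<le> A^2 * ((1+a)*\<delta>)"
    using bounds unfolding abs_mult by (intro mult_mono) (auto simp: power2_eq_square intro: mult_mono)
  moreover have "\<epsilon>^2 \<le> Du*Dw" using Du Dw pos by (simp add: power2_eq_square mult_mono)
  ultimately have "\<bar>w3*w2*(Dw - Du)\<bar>/(Du*Dw) \<le> A^2 * ((1+a)*\<delta>) / \<epsilon>^2"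
    using pos Du Dw by (intro frac_le) auto
  then have t2: "\<bar>w3*w2*(Dw - Du)/(Du*Dw)\<bar> \<le> A^2*(1+a)/\<epsilon>^2*\<delta>"
    using Du Dw pos by (simp add: abs_mult)
  have "\<bar>u3*u2/Du - w3*w2/Dw\<bar> \<le> \<bar>(u3*u2 - w3*w2)/Du\<bar> + \<bar>w3*w2*(Dw - Du)/(Du*Dw)\<bar>"
    unfolding eq by (rule abs_triangle_ineq)
  also have "\<dots> \<le> 2*A/\<epsilon>*\<delta> + A^2*(1+a)/\<epsilon>^2*\<delta>" using t1 t2 by simp
  finally show ?thesis unfolding Du_def Dw_def by (simp add: algebra_simps)
qed

locale sicmr_model =
  fixes \<alpha> c \<mu> p \<epsilon> a \<gamma> m d q :: real
  assumes pos: "\<alpha> > 0" "c > 0" "\<mu> > 0" "p > 0" "\<epsilon> > 0" "a > 0" "\<gamma> > 0" "m > 0" "d > 0" "q > 0"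
begin

abbreviation f where "f \<equiv> sicmr \<alpha> c \<mu> p \<epsilon> a \<gamma> m d q"
abbreviation \<Omega> where "\<Omega> \<equiv> Omega \<alpha> \<mu>"
abbreviation N where "N \<equiv> \<alpha>/\<mu>"
abbreviation kC where "kC \<equiv> m + d + \<mu>"

definition clearance :: "real^5 \<Rightarrow> real"
  where "clearance v = p * v$3 / (\<epsilon> + v$2 + a * v$4)"

lemma f_nth:
  "f v $ 1 = \<alpha> - c * v$1 * v$2 - \<mu> * v$1"
  "f v $ 2 = v$2 * (c * v$1 - clearance v - \<gamma> - \<mu>)"
  "f v $ 3 = clearance v * v$2 - kC * v$3"
  "f v $ 4 = m * v$3 - (q + \<mu>) * v$4"
  "f v $ 5 = q * v$4 + \<gamma> * v$2 - \<mu> * v$5"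
  by (simp_all add: sicmr_def clearance_def Let_def algebra_simps)

lemma N_pos: "N > 0" using pos by simp

lemma kC_pos: "kC > 0" using pos by simp

lemma Omega_iff:
  "v \<in> \<Omega> \<longleftrightarrow> v$1 \<ge> 0 \<and> v$2 \<ge> 0 \<and> v$3 \<ge> 0 \<and> v$4 \<ge> 0 \<and> v$5 \<ge> 0 \<and> v$1+v$2+v$3+v$4+v$5 \<le> N"
  by (auto simp: Omega_def forall_5)

lemma Omega_nth_bounds:
  assumes "v \<in> \<Omega>" shows "0 \<le> v $ i" "v $ i \<le> N"
  using assms exhaust_5[of i] by (auto simp: Omega_iff)

lemma compact_Omega: "compact \<Omega>"
proof -
  have "closed \<Omega>" unfolding Omega_def
    by (intro closed_Collect_conj closed_Collect_all closed_Collect_le continuous_intros)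
  moreover have "norm v \<le> 5 * N" if "v \<in> \<Omega>" for v
    using norm_le_l1_5[of v] Omega_nth_bounds[OF that] by (smt (verit) abs_of_nonneg)
  then have "bounded \<Omega>" unfolding bounded_iff by blast
  ultimately show ?thesis by (simp add: compact_eq_bounded_closed)
qed

lemma denominator_ge: "v \<in> \<Omega> \<Longrightarrow> \<epsilon> + v$2 + a * v$4 \<ge> \<epsilon>"
  using Omega_nth_bounds[of v 2] Omega_nth_bounds[of v 4] pos by auto

lemma continuous_on_clearance: "continuous_on \<Omega> clearance"
  unfolding clearance_def using denominator_ge pos
  by (intro continuous_intros) (auto simp: less_le_trans[OF _ denominator_ge] dest: denominator_ge)

lemma continuous_on_f_nth: "continuous_on \<Omega> (\<lambda>v. f v $ i)"
  using exhaust_5[of i] continuous_on_clearance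
  by (elim disjE) (auto simp: f_nth intro!: continuous_intros)

lemma solution_nth_deriv:
  "is_solution f x \<Longrightarrow> t \<ge> 0 \<Longrightarrow> ((\<lambda>t. x t $ i) has_real_derivative f (x t) $ i) (at t within {0..})"
  unfolding is_solution_def by (auto intro: has_real_derivative_nth)

lemma continuous_on_solution: "is_solution f x \<Longrightarrow> continuous_on {0..} x"
  unfolding is_solution_def continuous_on_eq_continuous_within
  by (auto intro: has_vector_derivative_continuous)

lemma sum_f_nth:
  "f v $ 1 + f v $ 2 + f v $ 3 + f v $ 4 + f v $ 5 = \<alpha> - \<mu> * (v$1 + v$2 + v$3 + v$4 + v$5) - d * v$3"
  by (simp add: f_nth algebra_simps)

lemma solution_bounded_shortly:
  assumes sol: "is_solution f x" and t1: "t1 \<ge> 0" and xt1: "x t1 \<in> \<Omega>"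
  shows "\<exists>b>t1. \<forall>u\<in>{t1..b}. (\<forall>i. \<bar>x u $ i\<bar> \<le> N + 1) \<and> \<epsilon>/2 \<le> \<epsilon> + x u $ 2 + a * x u $ 4"
proof -
  define r where "r = min 1 (\<epsilon>/(2*(1+a)))"
  have r: "r > 0" "r \<le> 1" using pos by (auto simp: r_def)
  have "r*(1+a) \<le> \<epsilon>/(2*(1+a))*(1+a)" using pos by (intro mult_right_mono) (auto simp: r_def)
  moreover have "\<epsilon>/(2*(1+a))*(1+a) = \<epsilon>/2" using pos by (simp add: field_simps)
  ultimately have r_small: "r*(1+a) \<le> \<epsilon>/2" by linarith
  have "continuous (at t1 within {0..}) x"
    using continuous_on_solution[OF sol] t1 by (simp add: continuous_on_eq_continuous_within)
  then obtain \<eta> where \<eta>: "\<eta> > 0" "\<forall>u\<in>{0..}. dist u t1 < \<eta> \<longrightarrow> dist (x u) (x t1) < r"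
    unfolding continuous_within_eps_delta using r(1) by blast
  have near: "\<bar>x u $ i - x t1 $ i\<bar> < r" if "u \<in> {t1..t1 + \<eta>/2}" for u i
  proof -
    have "dist u t1 < \<eta>" using that \<eta>(1) by (auto simp: dist_real_def)
    then have "dist (x u) (x t1) < r" using \<eta>(2) that t1 by auto
    then show ?thesis using abs_nth_diff_le_dist[of "x u" i "x t1"] by linarith
  qed
  have "\<bar>x u $ i\<bar> \<le> N + 1" "x u $ i \<ge> - r" if "u \<in> {t1..t1 + \<eta>/2}" for u i
    using near[OF that, of i] Omega_nth_bounds[OF xt1, of i] r by (auto simp: abs_le_iff abs_less_iff)
  moreover have "\<epsilon>/2 \<le> \<epsilon> + x u $ 2 + a * x u $ 4" if "u \<in> {t1..t1 + \<eta>/2}" for u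
    using calculation(2)[OF that, of 2] mult_left_mono[OF calculation(2)[OF that, of 4], of a] r_small pos
    by (simp add: algebra_simps)
  ultimately show ?thesis using \<eta>(1) by (intro exI[of _ "t1 + \<eta>/2"]) auto
qed

text \<open>While the solution stays bounded and away from the pole of the saturation term, the
  equations for \<open>I\<close> and \<open>C\<close> have the form \<open>y' = y \<cdot> (bounded factor)\<close>, so these components
  cannot become negative.\<close>

lemma infected_C_nonneg_shortly:
  assumes sol: "is_solution f x" and t1: "t1 \<ge> 0" and xt1: "x t1 \<in> \<Omega>"
    and bounded: "\<And>u i. u \<in> {t1..b} \<Longrightarrow> \<bar>x u $ i\<bar> \<le> N + 1"
    and D: "\<And>u. u \<in> {t1..b} \<Longrightarrow> \<epsilon>/2 \<le> \<epsilon> + x u $ 2 + a * x u $ 4"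
    and u: "u \<in> {t1..b}"
  shows "x u $ 2 \<ge> 0" "x u $ 3 \<ge> 0"
proof -
  define H where "H = c*(N+1) + p*(N+1)/(\<epsilon>/2)"
  have ratio: "\<bar>p * x u $ i / (\<epsilon> + x u $ 2 + a * x u $ 4)\<bar> \<le> p*(N+1)/(\<epsilon>/2)"
    if "u \<in> {t1..b}" for u i
  proof -
    have "\<bar>p * x u $ i / (\<epsilon> + x u $ 2 + a * x u $ 4)\<bar> = p * \<bar>x u $ i\<bar> / (\<epsilon> + x u $ 2 + a * x u $ 4)"
      using D[OF that] pos by (simp add: abs_mult)
    also have "\<dots> \<le> p*(N+1)/(\<epsilon>/2)"
      using D[OF that] bounded[OF that, of i] pos by (intro frac_le mult_left_mono) auto
    finally show ?thesis .
  qed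
  have factor_le: "c * x u $ 1 - clearance (x u) - \<gamma> - \<mu> \<le> H"
    "p * x u $ 2 / (\<epsilon> + x u $ 2 + a * x u $ 4) - kC \<le> H" if "u \<in> {t1..b}" for u
  proof -
    have "c * x u $ 1 \<le> c * (N + 1)" "c * (N + 1) \<ge> 0"
      using bounded[OF that, of 1] pos by (auto intro: mult_left_mono)
    moreover have "- (p * x u $ 3 / (\<epsilon> + x u $ 2 + a * x u $ 4)) \<le> p*(N+1)/(\<epsilon>/2)"
      "p * x u $ 2 / (\<epsilon> + x u $ 2 + a * x u $ 4) \<le> p*(N+1)/(\<epsilon>/2)"
      using ratio[OF that, of 3] ratio[OF that, of 2] by (auto simp only: abs_le_iff)
    ultimately show "c * x u $ 1 - clearance (x u) - \<gamma> - \<mu> \<le> H"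
      "p * x u $ 2 / (\<epsilon> + x u $ 2 + a * x u $ 4) - kC \<le> H"
      using pos kC_pos unfolding H_def clearance_def by linarith+
  qed
  note deriv = solution_nth_deriv[OF sol] and start = Omega_nth_bounds(1)[OF xt1]
  show "x u $ 2 \<ge> 0"
  proof (rule nonneg_if_derivative_ge_when_negative[of t1 b "\<lambda>t. x t $ 2" "\<lambda>t. f (x t) $ 2" H u])
    fix u assume u: "u \<in> {t1..b}" "x u $ 2 < 0"
    then show "f (x u) $ 2 \<ge> H * x u $ 2"
      using factor_le(1)[OF u(1)] by (simp add: f_nth mult.commute mult_left_mono_neg)
  qed (use deriv t1 start u in auto)
  show "x u $ 3 \<ge> 0"
  proof (rule nonneg_if_derivative_ge_when_negative[of t1 b "\<lambda>t. x t $ 3" "\<lambda>t. f (x t) $ 3" H u])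
    fix u assume u: "u \<in> {t1..b}" "x u $ 3 < 0"
    have "f (x u) $ 3 = x u $ 3 * (p * x u $ 2 / (\<epsilon> + x u $ 2 + a * x u $ 4) - kC)"
      using D[OF u(1)] pos by (simp add: f_nth clearance_def field_simps)
    then show "f (x u) $ 3 \<ge> H * x u $ 3"
      using factor_le(2)[OF u(1)] u(2) by (simp add: mult.commute mult_left_mono_neg)
  qed (use deriv t1 start u in auto)
qed

lemma solution_stays_in_Omega_shortly:
  assumes sol: "is_solution f x" and t1: "t1 \<ge> 0" and xt1: "x t1 \<in> \<Omega>"
  shows "\<exists>\<eta>>0. \<forall>u\<in>{t1..t1+\<eta>}. x u \<in> \<Omega>"
proof -
  obtain b where b: "b > t1" and bounds: "\<And>u i. u \<in> {t1..b} \<Longrightarrow> \<bar>x u $ i\<bar> \<le> N + 1"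
    "\<And>u. u \<in> {t1..b} \<Longrightarrow> \<epsilon>/2 \<le> \<epsilon> + x u $ 2 + a * x u $ 4"
    using solution_bounded_shortly[OF assms] by blast
  have IC: "x u $ 2 \<ge> 0" "x u $ 3 \<ge> 0" if "u \<in> {t1..b}" for u
    using infected_C_nonneg_shortly[OF assms bounds that] by auto
  have stays: "y u \<ge> 0"
    if "\<And>u. u \<in> {t1..b} \<Longrightarrow> (y has_real_derivative y' u) (at u within {0..})"
      and "y t1 \<ge> 0" and "\<And>u. u \<in> {t1..b} \<Longrightarrow> y u < 0 \<Longrightarrow> y' u \<ge> 0 * y u" and "u \<in> {t1..b}"
    for y y' u
    using nonneg_if_derivative_ge_when_negative[of t1 b y y' 0 u] that t1 by blast
  have deriv: "((\<lambda>t. x t $ i) has_real_derivative f (x u) $ i) (at u within {0..})"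
    if "u \<in> {t1..b}" for u i
    using solution_nth_deriv[OF sol] that t1 by auto
  note start = Omega_nth_bounds(1)[OF xt1]
  have M: "x u $ 4 \<ge> 0" if "u \<in> {t1..b}" for u
  proof (rule stays[OF deriv start _ that])
    fix u assume u: "u \<in> {t1..b}" "x u $ 4 < 0"
    have "(q + \<mu>) * x u $ 4 \<le> 0" using u(2) pos by (intro mult_nonneg_nonpos) auto
    moreover have "m * x u $ 3 \<ge> 0" using IC(2)[OF u(1)] pos by simp
    ultimately show "f (x u) $ 4 \<ge> 0 * x u $ 4" by (simp add: f_nth)
  qed
  have S: "x u $ 1 \<ge> 0" if "u \<in> {t1..b}" for u
  proof (rule stays[OF deriv start _ that])
    fix u assume u: "u \<in> {t1..b}" "x u $ 1 < 0"
    have "(c * x u $ 2 + \<mu>) * x u $ 1 \<le> 0"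
      using u(2) IC(1)[OF u(1)] pos by (intro mult_nonneg_nonpos) auto
    then show "f (x u) $ 1 \<ge> 0 * x u $ 1" using pos by (simp add: f_nth algebra_simps)
  qed
  have R: "x u $ 5 \<ge> 0" if "u \<in> {t1..b}" for u
  proof (rule stays[OF deriv start _ that])
    fix u assume u: "u \<in> {t1..b}" "x u $ 5 < 0"
    have "\<mu> * x u $ 5 \<le> 0" using u(2) pos by (intro mult_nonneg_nonpos) auto
    moreover have "q * x u $ 4 \<ge> 0" "\<gamma> * x u $ 2 \<ge> 0" using M[OF u(1)] IC(1)[OF u(1)] pos by simp_all
    ultimately show "f (x u) $ 5 \<ge> 0 * x u $ 5" by (simp add: f_nth)
  qed
  let ?total = "\<lambda>t. x t $ 1 + x t $ 2 + x t $ 3 + x t $ 4 + x t $ 5"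
  have slack: "N - ?total u \<ge> 0" if "u \<in> {t1..b}" for u
  proof (rule stays[of "\<lambda>t. N - ?total t" "\<lambda>t. \<mu> * ?total t + d * x t $ 3 - \<alpha>", OF _ _ _ that])
    fix u assume u: "u \<in> {t1..b}"
    show "((\<lambda>t. N - ?total t) has_real_derivative \<mu> * ?total u + d * x u $ 3 - \<alpha>) (at u within {0..})"
      using deriv[OF u] sum_f_nth[of "x u"] by (auto intro!: derivative_eq_intros)
    assume "N - ?total u < 0"
    then have "\<mu> * ?total u \<ge> \<mu> * N" using pos by (intro mult_left_mono) auto
    moreover have "d * x u $ 3 \<ge> 0" using IC(2)[OF u] pos by simp
    ultimately show "\<mu> * ?total u + d * x u $ 3 - \<alpha> \<ge> 0 * (N - ?total u)" using pos by simp
  qed (use xt1 in \<open>simp add: Omega_iff\<close>)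
  show ?thesis
    using IC M S R slack b by (intro exI[of _ "b - t1"]) (auto simp: Omega_iff)
qed

lemma solution_in_Omega:
  assumes "is_solution f x" "x 0 \<in> \<Omega>" "t \<ge> 0"
  shows "x t \<in> \<Omega>"
  using stays_in_closed_if_locally[OF continuous_on_solution[OF assms(1)]
      compact_imp_closed[OF compact_Omega] assms(2) _ assms(3)]
    solution_stays_in_Omega_shortly[OF assms(1)] by auto

definition clamp :: "real \<Rightarrow> real" where "clamp z = max 0 (min N z)"

definition proj :: "real^5 \<Rightarrow> real^5" where "proj v = (\<chi> i. clamp (v$i))"

lemma proj_nth [simp]: "proj v $ i = clamp (v $ i)"
  by (simp add: proj_def)

lemma clamp_bounds: "0 \<le> clamp z" "clamp z \<le> N"
  using N_pos by (auto simp: clamp_def)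

lemma abs_clamp_diff_le: "\<bar>clamp z - clamp w\<bar> \<le> \<bar>z - w\<bar>"
  by (auto simp: clamp_def)

lemma proj_proj [simp]: "proj (proj v) = proj v"
  using clamp_bounds by (simp add: vec_eq_iff clamp_def)

lemma proj_eq_self: "v \<in> \<Omega> \<Longrightarrow> proj v = v"
  using Omega_nth_bounds by (simp add: vec_eq_iff clamp_def)

text \<open>Outside \<open>\<Omega>\<close> the field is continued by \<open>f \<circ> proj\<close>, which is globally Lipschitz
  and bounded, so Picard iteration yields solutions; they never leave \<open>\<Omega>\<close>, where the two
  fields agree.\<close>

definition L_clearance where "L_clearance = 2*N/\<epsilon> + N^2*(1+a)/\<epsilon>^2"

definition L_proj where
  "L_proj = (2*c*N + \<mu>) + (2*c*N + p*L_clearance + \<gamma> + \<mu>) + (p*L_clearance + kC) + (m + q + \<mu>) + (q + \<gamma> + \<mu>)"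

lemma L_proj_pos: "L_proj > 0"
  using pos N_pos unfolding L_proj_def L_clearance_def by (simp add: add_pos_pos)

lemma lipschitz_f_proj: "norm (f (proj x) - f (proj y)) \<le> L_proj * norm (x - y)"
proof -
  define \<delta> where "\<delta> = norm (x - y)"
  let ?u = "proj x" and ?v = "proj y"
  have close: "\<bar>?u $ i - ?v $ i\<bar> \<le> \<delta>" for i
    using abs_clamp_diff_le[of "x $ i" "y $ i"] component_le_norm_cart[of "x - y" i]
    unfolding \<delta>_def by simp
  have bounds: "0 \<le> ?u $ i" "?u $ i \<le> N" "0 \<le> ?v $ i" "?v $ i \<le> N" for i
    using clamp_bounds by auto
  then have abs_bounds: "\<bar>?u $ i\<bar> \<le> N" "\<bar>?v $ i\<bar> \<le> N" for i by (metis abs_of_nonneg)+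
  define G where "G w = w$3 * w$2 / (\<epsilon> + w$2 + a * w$4)" for w :: "real^5"
  have expanded: "f w $ 1 = \<alpha> - c * (w$1 * w$2) - \<mu> * w$1"
    "f w $ 2 = c * (w$1 * w$2) - p * G w - (\<gamma> + \<mu>) * w$2"
    "f w $ 3 = p * G w - kC * w$3" for w
  proof -
    have "clearance w * w$2 = p * G w" by (simp add: clearance_def G_def)
    then show "f w $ 1 = \<alpha> - c * (w$1 * w$2) - \<mu> * w$1"
      "f w $ 2 = c * (w$1 * w$2) - p * G w - (\<gamma> + \<mu>) * w$2" "f w $ 3 = p * G w - kC * w$3"
      by (simp_all add: f_nth algebra_simps)
  qed
  have G: "\<bar>G ?u - G ?v\<bar> \<le> L_clearance * \<delta>" unfolding G_def L_clearance_def
    by (rule abs_saturation_diff_le) (use bounds close pos in auto)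
  have SI: "\<bar>?u$1 * ?u$2 - ?v$1 * ?v$2\<bar> \<le> 2*N*\<delta>"
    by (rule abs_mult_diff_le) (use abs_bounds close in auto)
  have scale: "\<bar>k * X\<bar> \<le> k * Z" if "k \<ge> 0" "\<bar>X\<bar> \<le> Z" for k X Z :: real
    using that by (simp add: abs_mult mult_left_mono)
  have c1: "\<bar>f ?u $ 1 - f ?v $ 1\<bar> \<le> (2*c*N + \<mu>)*\<delta>"
    using scale[OF _ SI, of c] scale[OF _ close[of 1], of \<mu>] pos
    unfolding expanded by (simp add: algebra_simps abs_le_iff)
  have c2: "\<bar>f ?u $ 2 - f ?v $ 2\<bar> \<le> (2*c*N + p*L_clearance + \<gamma> + \<mu>)*\<delta>"
    using scale[OF _ SI, of c] scale[OF _ G, of p] scale[OF _ close[of 2], of "\<gamma> + \<mu>"] pos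
    unfolding expanded by (simp add: algebra_simps abs_le_iff)
  have c3: "\<bar>f ?u $ 3 - f ?v $ 3\<bar> \<le> (p*L_clearance + kC)*\<delta>"
    using scale[OF _ G, of p] scale[OF _ close[of 3], of kC] pos
    unfolding expanded by (simp add: algebra_simps abs_le_iff)
  have c4: "\<bar>f ?u $ 4 - f ?v $ 4\<bar> \<le> (m + q + \<mu>)*\<delta>"
    using scale[OF _ close[of 3], of m] scale[OF _ close[of 4], of "q + \<mu>"] pos
    unfolding f_nth by (simp add: algebra_simps abs_le_iff)
  have c5: "\<bar>f ?u $ 5 - f ?v $ 5\<bar> \<le> (q + \<gamma> + \<mu>)*\<delta>"
    using scale[OF _ close[of 4], of q] scale[OF _ close[of 2], of \<gamma>] scale[OF _ close[of 5], of \<mu>] pos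
    unfolding f_nth by (simp add: algebra_simps abs_le_iff)
  have "norm (f ?u - f ?v) \<le> \<bar>f ?u $ 1 - f ?v $ 1\<bar> + \<bar>f ?u $ 2 - f ?v $ 2\<bar> + \<bar>f ?u $ 3 - f ?v $ 3\<bar>
      + \<bar>f ?u $ 4 - f ?v $ 4\<bar> + \<bar>f ?u $ 5 - f ?v $ 5\<bar>"
    using norm_le_l1_5[of "f ?u - f ?v"] by simp
  also have "\<dots> \<le> L_proj * \<delta>"
  proof -
    have "L_proj * \<delta> = (2*c*N + \<mu>)*\<delta> + (2*c*N + p*L_clearance + \<gamma> + \<mu>)*\<delta>
        + (p*L_clearance + kC)*\<delta> + (m + q + \<mu>)*\<delta> + (q + \<gamma> + \<mu>)*\<delta>"
      unfolding L_proj_def by (simp only: distrib_right)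
    then show ?thesis using c1 c2 c3 c4 c5 by linarith
  qed
  finally show ?thesis unfolding \<delta>_def .
qed

definition B_proj where "B_proj = norm (f (proj 0)) + L_proj * (5*N)"

lemma bounded_f_proj: "norm (f (proj x)) \<le> B_proj"
proof -
  have "\<bar>proj x $ i\<bar> \<le> N" for i using clamp_bounds[of "x $ i"] by simp
  from this[of 1] this[of 2] this[of 3] this[of 4] this[of 5]
  have "norm (proj x - 0) \<le> 5 * N" using norm_le_l1_5[of "proj x"] by simp
  then have "L_proj * norm (proj x - 0) \<le> L_proj * (5*N)"
    using L_proj_pos by (intro mult_left_mono) auto
  then have "norm (f (proj x) - f (proj 0)) \<le> L_proj * (5*N)"
    using lipschitz_f_proj[of "proj x" 0] by simp
  then show ?thesis unfolding B_proj_def using norm_triangle_sub[of "f (proj x)" "f (proj 0)"] by linarith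
qed

lemma norm_f_le: "v \<in> \<Omega> \<Longrightarrow> norm (f v) \<le> B_proj"
  using bounded_f_proj[of v] proj_eq_self by simp

lemma solution_exists:
  assumes x0: "x0 \<in> \<Omega>"
  shows "\<exists>x. is_solution f x \<and> x 0 = x0"
proof -
  obtain y where y0: "y 0 = x0" and sol: "is_solution (\<lambda>v. f (proj v)) y"
    using solution_exists_if_lipschitz_bounded[OF lipschitz_f_proj bounded_f_proj L_proj_pos] by blast
  have deriv: "((\<lambda>t. y t $ i) has_real_derivative f (proj (y t)) $ i) (at t within {0..})" if "t \<ge> 0" for t i
    using sol that unfolding is_solution_def by (auto intro: has_real_derivative_nth)
  have nonneg: "y t $ i \<ge> 0" if "t \<ge> 0" for t i
  proof (rule nonneg_if_derivative_ge_when_negative[of 0 t "\<lambda>t. y t $ i" _ 0])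
    show "y 0 $ i \<ge> 0" using y0 Omega_nth_bounds[OF x0] by simp
    fix u assume "y u $ i < 0"
    then have zero: "proj (y u) $ i = 0" by (simp add: clamp_def)
    show "f (proj (y u)) $ i \<ge> 0 * y u $ i"
      using exhaust_5[of i] zero clamp_bounds pos
      by (elim disjE) (auto simp: f_nth clearance_def)
  qed (use deriv that in auto)
  let ?slack = "\<lambda>t. N - (y t $ 1 + y t $ 2 + y t $ 3 + y t $ 4 + y t $ 5)"
  have slack: "?slack t \<ge> 0" if "t \<ge> 0" for t
  proof (rule nonneg_if_derivative_ge_when_negative[of 0 t ?slack _ 0])
    fix u assume u: "u \<in> {0..t}"
    show "(?slack has_real_derivative - (f (proj (y u)) $ 1 + f (proj (y u)) $ 2 + f (proj (y u)) $ 3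
        + f (proj (y u)) $ 4 + f (proj (y u)) $ 5)) (at u within {0..})"
      using deriv u by (auto intro!: derivative_eq_intros)
    let ?v = "proj (y u)"
    assume "?slack u < 0"
    have "?v$1 + ?v$2 + ?v$3 + ?v$4 + ?v$5 \<ge> N"
    proof (cases "\<forall>j. y u $ j \<le> N")
      case True
      then have "?v $ j = y u $ j" for j using nonneg[of u j] u by (simp add: clamp_def)
      then show ?thesis using \<open>?slack u < 0\<close> by simp
    next
      case False
      then obtain j where "y u $ j > N" by (auto simp: not_le)
      then have "?v $ j = N" using N_pos by (simp add: clamp_def)
      then show ?thesis using exhaust_5[of j] clamp_bounds[of "y u $ _"] by (smt (verit) proj_nth)
    qed
    then have "\<mu> * (?v$1 + ?v$2 + ?v$3 + ?v$4 + ?v$5) \<ge> \<alpha>"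
      using pos mult_left_mono[of N _ \<mu>] by simp
    moreover have "d * ?v$3 \<ge> 0" using clamp_bounds pos by simp
    ultimately show "- (f ?v $ 1 + f ?v $ 2 + f ?v $ 3 + f ?v $ 4 + f ?v $ 5) \<ge> 0 * ?slack u"
      unfolding sum_f_nth by simp
  qed (use that y0 x0 in \<open>auto simp: Omega_iff\<close>)
  have "y t \<in> \<Omega>" if "t \<ge> 0" for t
    using nonneg[OF that] slack[OF that] by (simp add: Omega_iff)
  then have "is_solution f y"
    using sol proj_eq_self unfolding is_solution_def by auto
  then show ?thesis using y0 by blast
qed

lemma solution_lipschitz:
  assumes sol: "is_solution f x" and x0: "x 0 \<in> \<Omega>" and st: "s \<ge> 0" "t \<ge> 0"
  shows "norm (x t - x s) \<le> B_proj * norm (t - s)"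
proof (rule differentiable_bound[of "{0..}" x "\<lambda>t h. h *\<^sub>R f (x t)"])
  fix u :: real assume u: "u \<in> {0..}"
  then show "(x has_derivative (\<lambda>h. h *\<^sub>R f (x u))) (at u within {0..})"
    using sol unfolding is_solution_def has_vector_derivative_def by auto
  show "onorm (\<lambda>h. h *\<^sub>R f (x u)) \<le> B_proj"
    using onorm_scaleR_left[OF bounded_linear_ident, of "f (x u)"] onorm_id[where 'a=real]
      norm_f_le[OF solution_in_Omega[OF sol x0]] u by simp
next
  show "convex {0::real..}" by (rule convex_real_interval)
qed (use st in auto)

lemma uniformly_continuous_on_solution:
  assumes "is_solution f x" "x 0 \<in> \<Omega>"
  shows "uniformly_continuous_on {0..} x"
proof (rule lipschitz_on_uniformly_continuous)
  have "0 \<le> B_proj" using norm_f_le[OF assms(2)] norm_ge_zero order_trans by blast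
  then show "B_proj-lipschitz_on {0..} x"
    using solution_lipschitz[OF assms] by (intro lipschitz_onI) (auto simp: dist_norm)
qed

lemma uniformly_continuous_on_comp_solution:
  fixes \<Phi> :: "real^5 \<Rightarrow> real"
  assumes sol: "is_solution f x" and x0: "x 0 \<in> \<Omega>" and K: "compact K" "continuous_on K \<Phi>"
    and in_K: "\<And>t. t \<ge> t0 \<Longrightarrow> x t \<in> K" and t0: "t0 \<ge> 0"
  shows "uniformly_continuous_on {t0..} (\<lambda>t. \<Phi> (x t))"
proof (rule uniformly_continuous_on_compose[of "{t0..}" x \<Phi>])
  show "uniformly_continuous_on {t0..} x"
    by (rule uniformly_continuous_on_subset[OF uniformly_continuous_on_solution[OF sol x0]]) (use t0 in auto)
  show "uniformly_continuous_on (x ` {t0..}) \<Phi>"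
    by (rule uniformly_continuous_on_subset[OF compact_uniformly_continuous[OF K(2,1)]]) (use in_K in auto)
qed

definition \<beta>S where "\<beta>S = c*N + \<mu>"

lemma \<beta>S_pos: "\<beta>S > 0"
  unfolding \<beta>S_def using pos N_pos by (simp add: add_pos_pos)

lemma susceptible_lower_bound:
  assumes sol: "is_solution f x" and x0: "x 0 \<in> \<Omega>" and t: "t \<ge> 0"
  shows "x t $ 1 \<ge> \<alpha>/\<beta>S + (x 0 $ 1 - \<alpha>/\<beta>S) * exp (-\<beta>S*(t-0))"
    and "x t $ 1 \<ge> min (x 0 $ 1) (\<alpha>/\<beta>S)"
proof -
  have "f (x u) $ 1 \<ge> \<alpha> - \<beta>S * x u $ 1" if "u \<ge> 0" for u
  proof -
    have "c * x u $ 1 * x u $ 2 \<le> c * x u $ 1 * N"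
      using Omega_nth_bounds[OF solution_in_Omega[OF sol x0 that]] pos by (intro mult_left_mono) auto
    then show ?thesis by (simp add: f_nth \<beta>S_def algebra_simps)
  qed
  moreover note \<beta>S_pos
  moreover note deriv = solution_nth_deriv[OF sol, of _ 1]
  ultimately show "x t $ 1 \<ge> \<alpha>/\<beta>S + (x 0 $ 1 - \<alpha>/\<beta>S) * exp (-\<beta>S*(t-0))"
    and "x t $ 1 \<ge> min (x 0 $ 1) (\<alpha>/\<beta>S)"
    using lower_bound_if_derivative_ge_linear[of 0 "\<lambda>t. x t $ 1", OF _ deriv]
      ge_min_if_derivative_ge_linear[of 0 "\<lambda>t. x t $ 1", OF _ deriv] t
    by auto
qed

definition S_min where "S_min = \<alpha>/\<beta>S * (1 - exp (-\<beta>S))"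

lemma S_min_pos: "S_min > 0"
  unfolding S_min_def using pos \<beta>S_pos by simp

lemma susceptible_ge_S_min:
  assumes sol: "is_solution f x" and x0: "x 0 \<in> \<Omega>" and t: "t \<ge> 1"
  shows "x t $ 1 \<ge> S_min"
proof -
  have "x 0 $ 1 * exp (-\<beta>S*t) \<ge> 0" using Omega_nth_bounds[OF x0, of 1] by simp
  moreover have "exp (-\<beta>S*t) \<le> exp (-\<beta>S)" using t \<beta>S_pos by simp
  then have "\<alpha>/\<beta>S * exp (-\<beta>S*t) \<le> \<alpha>/\<beta>S * exp (-\<beta>S)"
    using pos \<beta>S_pos by (intro mult_left_mono) auto
  ultimately show ?thesis
    using susceptible_lower_bound(1)[OF sol x0, of t] t unfolding S_min_def by (simp add: algebra_simps)
qed

lemma susceptible_pos: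
  assumes "is_solution f x" "x 0 \<in> \<Omega>" "x 0 $ 1 > 0" "t \<ge> 0"
  shows "x t $ 1 > 0"
  using susceptible_lower_bound(2)[OF assms(1,2,4)] assms(3) divide_pos_pos[OF _ \<beta>S_pos, of \<alpha>] pos
  by linarith

lemma infected_pos:
  assumes sol: "is_solution f x" and x0: "x 0 \<in> \<Omega>" and I0: "x 0 $ 2 > 0" and t: "t \<ge> 0"
  shows "x t $ 2 > 0"
proof -
  define H where "H = c*N + p*N/\<epsilon> + \<gamma> + \<mu>"
  have "f (x u) $ 2 \<ge> - H * x u $ 2" if "u \<ge> 0" for u
  proof -
    have v: "x u \<in> \<Omega>" by (rule solution_in_Omega[OF sol x0 that])
    have "clearance (x u) \<le> p * N / \<epsilon>"
      unfolding clearance_def using Omega_nth_bounds[OF v, of 3] denominator_ge[OF v] pos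
      by (intro frac_le mult_left_mono) auto
    moreover have "c * x u $ 1 \<ge> 0" "c * N \<ge> 0" using Omega_nth_bounds[OF v, of 1] pos by auto
    ultimately have "c * x u $ 1 - clearance (x u) - \<gamma> - \<mu> \<ge> - H" unfolding H_def by linarith
    then have "x u $ 2 * (c * x u $ 1 - clearance (x u) - \<gamma> - \<mu>) \<ge> x u $ 2 * (- H)"
      using Omega_nth_bounds(1)[OF v, of 2] by (rule mult_left_mono)
    then show ?thesis by (simp add: f_nth mult.commute)
  qed
  then have "x t $ 2 \<ge> x 0 $ 2 * exp (- H * (t - 0))"
    using solution_nth_deriv[OF sol] t by (intro exp_lower_bound_if_derivative_ge) auto
  moreover have "x 0 $ 2 * exp (- H * (t - 0)) > 0" using I0 by simp
  ultimately show ?thesis by linarith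
qed

definition equilibrium :: "real \<Rightarrow> real \<Rightarrow> real^5"
  where "equilibrium s i = mk5 s i 0 0 (\<gamma> * i / \<mu>)"

abbreviation R\<^sub>0 where "R\<^sub>0 \<equiv> R0 \<alpha> c \<mu> \<gamma>"

definition S1 where "S1 = (\<mu> + \<gamma>)/c"
definition I1 where "I1 = \<mu>/c * (R\<^sub>0 - 1)"

lemma E0_eq_equilibrium: "E0 \<alpha> \<mu> = equilibrium N 0"
  by (simp add: E0_def equilibrium_def)

lemma E1_eq_equilibrium: "E1 \<alpha> c \<mu> \<gamma> = equilibrium S1 I1"
proof -
  have "\<gamma> * I1 / \<mu> = \<gamma>/c * (R\<^sub>0 - 1)" using pos by (simp add: I1_def)
  then show ?thesis by (simp add: E1_def equilibrium_def S1_def I1_def)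
qed

lemma S1_pos: "S1 > 0" using pos by (simp add: S1_def)

lemma I1_pos_iff: "I1 > 0 \<longleftrightarrow> R\<^sub>0 > 1"
  using pos by (simp add: I1_def zero_less_mult_iff zero_less_divide_iff)

lemma alpha_at_E1: "\<alpha> = c * S1 * I1 + \<mu> * S1"
proof -
  have "c * S1 * I1 + \<mu> * S1 = S1 * \<mu> * R\<^sub>0" using pos by (simp add: I1_def algebra_simps)
  also have "\<dots> = \<alpha>" using pos by (simp add: S1_def R0_def)
  finally show ?thesis by simp
qed

lemma gamma_at_E1: "c * S1 - \<gamma> - \<mu> = 0"
  using pos unfolding S1_def by simp

definition lyapunov :: "real \<Rightarrow> real \<Rightarrow> real \<Rightarrow> real^5 \<Rightarrow> real"
  where "lyapunov s i \<theta> v = volterra s (v$1) + volterra i (v$2) + \<theta> * v$3"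

definition lyapunov_deriv :: "real \<Rightarrow> real \<Rightarrow> real \<Rightarrow> real^5 \<Rightarrow> real"
  where "lyapunov_deriv s i \<theta> v = (1 - s / v$1) * f v $ 1 + (1 - i / v$2) * f v $ 2 + \<theta> * f v $ 3"

lemma lyapunov_equilibrium [simp]: "lyapunov s i \<theta> (equilibrium s i) = 0"
  by (simp add: lyapunov_def equilibrium_def)

lemma has_real_derivative_lyapunov:
  assumes sol: "is_solution f x" and t: "t \<ge> 0" and S: "x t $ 1 > 0" and I: "x t $ 2 > 0 \<or> i = 0"
  shows "((\<lambda>t. lyapunov s i \<theta> (x t)) has_real_derivative lyapunov_deriv s i \<theta> (x t)) (at t within {0..})"
  unfolding lyapunov_def lyapunov_deriv_def
  using S I solution_nth_deriv[OF sol t]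
  by (auto intro!: derivative_eq_intros has_real_derivative_volterra)

lemma lyapunov_deriv_eq:
  assumes S: "v$1 > 0" and I: "v$2 \<noteq> 0 \<or> i = 0" and eq: "\<alpha> = c * s * i + \<mu> * s"
  shows "lyapunov_deriv s i \<theta> v = - ((\<mu> + c * i) * (v$1 - s)^2 / v$1) + (c * s - \<gamma> - \<mu>) * (v$2 - i)
    + clearance v * ((\<theta> - 1) * v$2 + i) - \<theta> * kC * v$3"
proof -
  have identity: "(1 - s/X) * (A - c*X*Y - \<mu>*X) + (1 - i/Y) * (Y * (c*X - g - \<gamma> - \<mu>)) + \<theta> * (g*Y - kC*Z)
      = - ((\<mu> + c * i) * (X - s)^2 / X) + (c * s - \<gamma> - \<mu>) * (Y - i) + g * ((\<theta> - 1) * Y + i) - \<theta> * kC * Z"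
    if "X \<noteq> 0" "Y \<noteq> 0 \<or> i = 0" "A = c * s * i + \<mu> * s" for X Y Z g A
    using that by (cases "i = 0") (auto simp: field_simps power2_eq_square)
  show ?thesis
    unfolding lyapunov_deriv_def f_nth using identity[of "v$1" "v$2" \<alpha>] S I eq by simp
qed

lemma lyapunov_deriv_E0_le:
  assumes R: "R\<^sub>0 \<le> 1" and v: "v \<in> \<Omega>" "v$1 > 0"
  shows "lyapunov_deriv N 0 1 v \<le> - (\<mu> * (v$1 - N)^2 / v$1) - kC * v$3"
proof -
  have "c * \<alpha> / (\<mu> * (\<mu> + \<gamma>)) \<le> 1" using R by (simp add: R0_def)
  then have "c * \<alpha> \<le> \<mu> * (\<mu> + \<gamma>)" using pos by (simp add: divide_le_eq)
  then have "c * N \<le> \<mu> + \<gamma>" using pos by (simp add: divide_le_eq mult.commute)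
  then have "(c * N - \<gamma> - \<mu>) * (v$2 - 0) \<le> 0"
    using Omega_nth_bounds[OF v(1), of 2] by (intro mult_nonpos_nonneg) auto
  then show ?thesis using lyapunov_deriv_eq[of v 0 N 1] v pos by simp
qed

lemma lyapunov_deriv_E1_le:
  assumes R: "R\<^sub>0 > 1" and \<theta>: "\<theta> > 0" "\<theta> * (p - kC) \<le> p" "p * I1 \<le> \<theta> * kC * \<epsilon>"
    and v: "v \<in> \<Omega>" "v$1 > 0" "v$2 > 0"
  shows "lyapunov_deriv S1 I1 \<theta> v \<le> - ((\<mu> + c * I1) * (v$1 - S1)^2 / v$1)"
proof -
  define D where "D = \<epsilon> + v$2 + a * v$4"
  have D: "D > 0" using denominator_ge[OF v(1)] pos unfolding D_def by linarith
  have "clearance v * ((\<theta> - 1) * v$2 + I1) - \<theta> * kC * v$3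
      = v$3 / D * ((\<theta> * (p - kC) - p) * v$2 + (p * I1 - \<theta> * kC * \<epsilon>) - \<theta> * kC * a * v$4)"
    using D unfolding clearance_def D_def[symmetric] by (simp add: field_simps D_def)
  also have "\<dots> \<le> 0"
  proof (rule mult_nonneg_nonpos)
    show "v$3 / D \<ge> 0" using Omega_nth_bounds[OF v(1), of 3] D by simp
    have "(\<theta> * (p - kC) - p) * v$2 \<le> 0" using \<theta> v by (intro mult_nonpos_nonneg) auto
    moreover have "\<theta> * kC * a * v$4 \<ge> 0" using \<theta> pos Omega_nth_bounds[OF v(1), of 4] by simp
    ultimately show "(\<theta> * (p - kC) - p) * v$2 + (p * I1 - \<theta> * kC * \<epsilon>) - \<theta> * kC * a * v$4 \<le> 0"
      using \<theta> by linarith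
  qed
  finally show ?thesis
    using lyapunov_deriv_eq[of v I1 S1 \<theta>] v alpha_at_E1 gamma_at_E1 by simp
qed

lemma tendsto_equilibrium_if_SIC:
  assumes sol: "is_solution f x"
    and S: "((\<lambda>t. x t $ 1) \<longlongrightarrow> s) at_top" and I: "((\<lambda>t. x t $ 2) \<longlongrightarrow> i) at_top"
    and C: "((\<lambda>t. x t $ 3) \<longlongrightarrow> 0) at_top"
  shows "(x \<longlongrightarrow> equilibrium s i) at_top"
proof -
  note deriv = solution_nth_deriv[OF sol]
  have M: "((\<lambda>t. x t $ 4) \<longlongrightarrow> (m * 0) / (q + \<mu>)) at_top"
  proof (rule tendsto_if_derivative_eq_linear[OF _ deriv])
    show "((\<lambda>t. m * x t $ 3) \<longlongrightarrow> m * 0) at_top" using C by (intro tendsto_intros)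
  qed (use pos in \<open>auto simp: f_nth\<close>)
  have R: "((\<lambda>t. x t $ 5) \<longlongrightarrow> (q * 0 + \<gamma> * i) / \<mu>) at_top"
  proof (rule tendsto_if_derivative_eq_linear[OF _ deriv])
    show "((\<lambda>t. q * x t $ 4 + \<gamma> * x t $ 2) \<longlongrightarrow> q * 0 + \<gamma> * i) at_top"
      using tendsto_add[OF tendsto_mult_left[OF M, of q] tendsto_mult_left[OF I, of \<gamma>]] by simp
  qed (use pos in \<open>auto simp: f_nth\<close>)
  show ?thesis
    by (rule tendsto_vec5) (use S I C M R in \<open>simp_all add: equilibrium_def\<close>)
qed

lemma uniformly_continuous_on_f_nth_solution:
  assumes "is_solution f x" "x 0 \<in> \<Omega>"
  shows "uniformly_continuous_on {0..} (\<lambda>t. f (x t) $ i)"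
  using uniformly_continuous_on_comp_solution[OF assms compact_Omega continuous_on_f_nth]
    solution_in_Omega[OF assms] by blast

lemma infected_tendsto_if_susceptible_tendsto:
  assumes sol: "is_solution f x" and x0: "x 0 \<in> \<Omega>"
    and S: "((\<lambda>t. x t $ 1) \<longlongrightarrow> s) at_top" and s: "s > 0"
  shows "((\<lambda>t. x t $ 2) \<longlongrightarrow> (\<alpha> - \<mu> * s) / (c * s)) at_top"
proof -
  have "((\<lambda>t. f (x t) $ 1) \<longlongrightarrow> 0) at_top"
    using derivative_tendsto_0_if_uniformly_continuous[OF _ solution_nth_deriv[OF sol] S
        uniformly_continuous_on_f_nth_solution[OF sol x0]] by simp
  then have "((\<lambda>t. (\<alpha> - \<mu> * x t $ 1 - f (x t) $ 1) / (c * x t $ 1)) \<longlongrightarrow> (\<alpha> - \<mu> * s - 0) / (c * s)) at_top"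
    using S s pos by (intro tendsto_intros) auto
  moreover have "eventually (\<lambda>t. (\<alpha> - \<mu> * x t $ 1 - f (x t) $ 1) / (c * x t $ 1) = x t $ 2) at_top"
    using order_tendstoD(1)[OF S s] by eventually_elim (use pos in \<open>simp add: f_nth field_simps\<close>)
  ultimately show ?thesis by (auto intro: Lim_transform_eventually)
qed

lemma lyapunov_antimono:
  assumes sol: "is_solution f x" and x0: "x 0 \<in> \<Omega>" and t0: "t0 \<ge> 0"
    and S: "\<And>t. t \<ge> t0 \<Longrightarrow> x t $ 1 > 0" and I: "\<And>t. t \<ge> t0 \<Longrightarrow> x t $ 2 > 0 \<or> i = 0"
    and nonpos: "\<And>v. v \<in> \<Omega> \<Longrightarrow> v$1 > 0 \<Longrightarrow> v$2 > 0 \<or> i = 0 \<Longrightarrow> lyapunov_deriv s i \<theta> v \<le> 0"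
    and t: "t0 \<le> t'" "t' \<le> t"
  shows "lyapunov s i \<theta> (x t) \<le> lyapunov s i \<theta> (x t')"
proof -
  have "- lyapunov s i \<theta> (x t') \<le> - lyapunov s i \<theta> (x t)"
  proof (rule le_if_derivative_nonneg[of t' t _ "\<lambda>u. - lyapunov_deriv s i \<theta> (x u)"])
    fix u assume "u \<in> {t'..t}"
    then show "((\<lambda>u. - lyapunov s i \<theta> (x u)) has_real_derivative - lyapunov_deriv s i \<theta> (x u))
        (at u within {0..})"
      using has_real_derivative_lyapunov[OF sol _ S I] t t0 by (auto intro!: derivative_eq_intros)
  next
    fix u assume "t' < u" "u < t"
    then show "0 \<le> - lyapunov_deriv s i \<theta> (x u)"
      using nonpos[OF solution_in_Omega[OF sol x0] S I, of u] t t0 by auto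
  qed (use t t0 in auto)
  then show ?thesis by simp
qed

text \<open>LaSalle's argument: the Lyapunov function decreases and is bounded below, and its
  derivative along the trajectory is uniformly continuous, so by Barbalat's lemma the derivative
  tends to zero. Uniform continuity needs the trajectory to stay in a compact set on which the
  derivative is continuous, i.e.\ away from \<open>S = 0\<close> and, when \<open>i > 0\<close>, from \<open>I = 0\<close>; the
  latter follows from the bound on the Lyapunov function itself.\<close>

lemma lyapunov_deriv_tendsto_0:
  assumes sol: "is_solution f x" and x0: "x 0 \<in> \<Omega>" and s: "s > 0" and i: "i \<ge> 0" and \<theta>: "\<theta> \<ge> 0"
    and I0: "i > 0 \<Longrightarrow> x 0 $ 2 > 0"
    and nonpos: "\<And>v. v \<in> \<Omega> \<Longrightarrow> v$1 > 0 \<Longrightarrow> v$2 > 0 \<or> i = 0 \<Longrightarrow> lyapunov_deriv s i \<theta> v \<le> 0"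
  shows "((\<lambda>t. lyapunov_deriv s i \<theta> (x t)) \<longlongrightarrow> 0) at_top"
proof -
  note in_\<Omega> = solution_in_Omega[OF sol x0]
  have S: "x t $ 1 \<ge> S_min" "x t $ 1 > 0" if "t \<ge> 1" for t
    using susceptible_ge_S_min[OF sol x0 that] S_min_pos by auto
  have I: "x t $ 2 > 0 \<or> i = 0" if "t \<ge> 0" for t
    using infected_pos[OF sol x0 _ that] I0 i by fastforce
  define V where "V t = lyapunov s i \<theta> (x t)" for t
  have V_deriv: "(V has_real_derivative lyapunov_deriv s i \<theta> (x t)) (at t within {0..})" if "t \<ge> 1" for t
    unfolding V_def using has_real_derivative_lyapunov[OF sol _ S(2)[OF that] I] that by auto
  have V_antimono: "V t \<le> V t'" if "1 \<le> t'" "t' \<le> t" for t t'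
    unfolding V_def using lyapunov_antimono[OF sol x0 _ _ _ nonpos that] S(2) I by auto
  have parts_nonneg: "volterra s (x t $ 1) \<ge> 0" "volterra i (x t $ 2) \<ge> 0" "\<theta> * x t $ 3 \<ge> 0"
    if "t \<ge> 1" for t
    using volterra_nonneg[of s "x t $ 1"] volterra_nonneg[of i "x t $ 2"] S(2)[OF that] I[of t]
      Omega_nth_bounds[OF in_\<Omega>, of t] that s i \<theta> by auto
  obtain l where "(V \<longlongrightarrow> l) at_top"
    using antimono_bounded_below_tendsto[of 1 V 0] V_antimono parts_nonneg
    by (fastforce simp: V_def lyapunov_def)
  define I_min where "I_min = (if i = 0 then 0 else exp (- (V 1 + i - i * ln i) / i))"
  have I_min: "x t $ 2 \<ge> I_min" if "t \<ge> 1" for t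
  proof (cases "i = 0")
    case False
    then have "i > 0" "x t $ 2 > 0" using i I[of t] that by auto
    moreover have "volterra i (x t $ 2) \<le> V 1"
      using V_antimono[OF order.refl that] parts_nonneg[OF that] by (simp add: V_def lyapunov_def)
    ultimately show ?thesis using exp_le_if_volterra_le False by (simp add: I_min_def)
  qed (use Omega_nth_bounds[OF in_\<Omega>, of t] that in \<open>simp add: I_min_def\<close>)
  define K where "K = \<Omega> \<inter> {v. S_min \<le> v$1 \<and> I_min \<le> v$2}"
  have "compact K"
    unfolding K_def by (intro compact_Int_closed compact_Omega closed_Collect_conj closed_Collect_le continuous_intros)
  moreover have "continuous_on K (lyapunov_deriv s i \<theta>)"
  proof -
    have K: "v \<in> \<Omega>" "v$1 \<noteq> 0" "i = 0 \<or> v$2 \<noteq> 0" if "v \<in> K" for v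
      using that S_min_pos by (auto simp: K_def I_min_def)
    have f: "continuous_on K (\<lambda>v. f v $ j)" for j
      by (rule continuous_on_subset[OF continuous_on_f_nth]) (auto simp: K_def)
    show ?thesis unfolding lyapunov_deriv_def
      using K by (cases "i = 0") (auto intro!: continuous_intros f)
  qed
  moreover have "x t \<in> K" if "t \<ge> 1" for t using in_\<Omega> S I_min that by (auto simp: K_def)
  ultimately have "uniformly_continuous_on {1..} (\<lambda>t. lyapunov_deriv s i \<theta> (x t))"
    by (intro uniformly_continuous_on_comp_solution[OF sol x0]) auto
  then show ?thesis
    using derivative_tendsto_0_if_uniformly_continuous[of 1 V] V_deriv \<open>(V \<longlongrightarrow> l) at_top\<close> by auto
qed

lemma susceptible_tendsto_if_lyapunov_deriv_tendsto_0:
  assumes sol: "is_solution f x" and x0: "x 0 \<in> \<Omega>" and k: "k > 0"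
    and D: "(D \<longlongrightarrow> 0) at_top" and le: "\<And>t. t \<ge> 1 \<Longrightarrow> D t \<le> - (k * (x t $ 1 - s)^2 / x t $ 1)"
  shows "((\<lambda>t. x t $ 1) \<longlongrightarrow> s) at_top"
proof (rule tendsto_if_square_diff_tendsto_0, rule tendsto_sandwich[of "\<lambda>t. 0" _ _ "\<lambda>t. - D t * N / k"])
  have "(x t $ 1 - s)^2 \<le> - D t * N / k" if t: "t \<ge> 1" for t
  proof -
    have S: "0 < x t $ 1" "x t $ 1 \<le> N"
      using susceptible_ge_S_min[OF sol x0 t] S_min_pos Omega_nth_bounds[OF solution_in_Omega[OF sol x0]] t
      by auto
    have "k * (x t $ 1 - s)^2 / N \<le> k * (x t $ 1 - s)^2 / x t $ 1"
      using S k pos by (intro divide_left_mono) (auto simp: zero_less_mult_iff)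
    also have "\<dots> \<le> - D t" using le[OF t] by simp
    finally have "k * (x t $ 1 - s)^2 \<le> - D t * N" by (simp only: pos_divide_le_eq[OF N_pos])
    then show ?thesis by (simp only: pos_le_divide_eq[OF k] mult.commute)
  qed
  then show "eventually (\<lambda>t. (x t $ 1 - s)^2 \<le> - D t * N / k) at_top"
    unfolding eventually_at_top_linorder by blast
  show "((\<lambda>t. - D t * N / k) \<longlongrightarrow> 0) at_top"
    using tendsto_divide[OF tendsto_mult[OF tendsto_minus[OF D] tendsto_const[of N]] tendsto_const[of k]] k
    by simp
qed auto

lemma E0_attracts:
  assumes R: "R\<^sub>0 \<le> 1" and sol: "is_solution f x" and x0: "x 0 \<in> \<Omega>"
  shows "(x \<longlongrightarrow> equilibrium N 0) at_top"
proof -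
  note in_\<Omega> = solution_in_Omega[OF sol x0]
  have S_pos: "x t $ 1 > 0" if "t \<ge> 1" for t
    using susceptible_ge_S_min[OF sol x0 that] S_min_pos by linarith
  have le: "lyapunov_deriv N 0 1 (x t) \<le> - (\<mu> * (x t $ 1 - N)^2 / x t $ 1) - kC * x t $ 3" if "t \<ge> 1" for t
    using lyapunov_deriv_E0_le[OF R in_\<Omega>[of t] S_pos[OF that]] that by simp
  have nonneg: "\<mu> * (x t $ 1 - N)^2 / x t $ 1 \<ge> 0" "kC * x t $ 3 \<ge> 0" if "t \<ge> 1" for t
    using S_pos[OF that] Omega_nth_bounds(1)[OF in_\<Omega>, of t 3] that pos by simp_all
  have D: "((\<lambda>t. lyapunov_deriv N 0 1 (x t)) \<longlongrightarrow> 0) at_top"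
  proof (rule lyapunov_deriv_tendsto_0[OF sol x0 N_pos])
    fix v assume v: "v \<in> \<Omega>" "v$1 > 0"
    have "\<mu> * (v$1 - N)^2 / v$1 \<ge> 0" "kC * v$3 \<ge> 0" using v Omega_nth_bounds[OF v(1), of 3] pos by auto
    then show "lyapunov_deriv N 0 1 v \<le> 0" using lyapunov_deriv_E0_le[OF R v] by linarith
  qed auto
  have S: "((\<lambda>t. x t $ 1) \<longlongrightarrow> N) at_top"
  proof (rule susceptible_tendsto_if_lyapunov_deriv_tendsto_0[OF sol x0 _ D])
    fix t :: real assume "t \<ge> 1"
    then show "lyapunov_deriv N 0 1 (x t) \<le> - (\<mu> * (x t $ 1 - N)^2 / x t $ 1)"
      using le[OF \<open>t \<ge> 1\<close>] nonneg(2)[OF \<open>t \<ge> 1\<close>] by linarith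
  qed (use pos in simp)
  have C_le: "x t $ 3 \<le> - lyapunov_deriv N 0 1 (x t) / kC" if "t \<ge> 1" for t
  proof -
    have "kC * x t $ 3 \<le> - lyapunov_deriv N 0 1 (x t)"
      using le[OF that] nonneg(1)[OF that] by linarith
    then have "kC * x t $ 3 / kC \<le> - lyapunov_deriv N 0 1 (x t) / kC"
      using kC_pos by (intro divide_right_mono) auto
    then show ?thesis using kC_pos by simp
  qed
  have "((\<lambda>t. - lyapunov_deriv N 0 1 (x t) / kC) \<longlongrightarrow> - 0 / kC) at_top"
    by (intro tendsto_divide tendsto_minus D tendsto_const) (use kC_pos in simp)
  then have C_bound: "((\<lambda>t. - lyapunov_deriv N 0 1 (x t) / kC) \<longlongrightarrow> 0) at_top" by simp
  have C_lower: "eventually (\<lambda>t. 0 \<le> x t $ 3) at_top"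
    using eventually_ge_at_top[of 0] by eventually_elim (rule Omega_nth_bounds(1)[OF in_\<Omega>])
  have C_upper: "eventually (\<lambda>t. x t $ 3 \<le> - lyapunov_deriv N 0 1 (x t) / kC) at_top"
    using eventually_ge_at_top[of 1] by eventually_elim (rule C_le)
  have C: "((\<lambda>t. x t $ 3) \<longlongrightarrow> 0) at_top"
    by (rule tendsto_sandwich[OF C_lower C_upper tendsto_const C_bound])
  have I: "((\<lambda>t. x t $ 2) \<longlongrightarrow> 0) at_top"
    using infected_tendsto_if_susceptible_tendsto[OF sol x0 S N_pos] pos by simp
  show ?thesis by (rule tendsto_equilibrium_if_SIC[OF sol S I C])
qed

lemma C_tendsto_0_if_clearance_tendsto_0:
  assumes sol: "is_solution f x" and x0: "x 0 \<in> \<Omega>"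
    and clearance: "((\<lambda>t. clearance (x t)) \<longlongrightarrow> 0) at_top"
  shows "((\<lambda>t. x t $ 3) \<longlongrightarrow> 0) at_top"
proof -
  note in_\<Omega> = solution_in_Omega[OF sol x0]
  define D_max where "D_max = \<epsilon> + N + a * N"
  have C_le: "x t $ 3 \<le> clearance (x t) * D_max / p" if "t \<ge> 0" for t
  proof -
    have v: "x t \<in> \<Omega>" by (rule in_\<Omega>[OF that])
    define D where "D = \<epsilon> + x t $ 2 + a * x t $ 4"
    have "a * x t $ 4 \<le> a * N" using Omega_nth_bounds[OF v, of 4] pos by (intro mult_left_mono) auto
    then have "D \<le> D_max" unfolding D_def D_max_def using Omega_nth_bounds[OF v, of 2] by linarith
    moreover have D: "D > 0" using denominator_ge[OF v] pos by (simp add: D_def)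
    ultimately have "x t $ 3 * D \<le> x t $ 3 * D_max"
      using Omega_nth_bounds[OF v, of 3] by (intro mult_left_mono) auto
    then have "x t $ 3 \<le> x t $ 3 * D_max / D" using D by (simp add: pos_le_divide_eq)
    moreover have "clearance (x t) * D_max / p = x t $ 3 * D_max / D"
      using pos unfolding clearance_def D_def[symmetric] by simp
    ultimately show ?thesis by simp
  qed
  have C_bound: "((\<lambda>t. clearance (x t) * D_max / p) \<longlongrightarrow> 0) at_top"
    using tendsto_divide[OF tendsto_mult[OF clearance tendsto_const[of D_max]] tendsto_const[of p]] pos
    by simp
  have C_lower: "eventually (\<lambda>t. 0 \<le> x t $ 3) at_top"
    using eventually_ge_at_top[of 0] by eventually_elim (rule Omega_nth_bounds(1)[OF in_\<Omega>])
  have C_upper: "eventually (\<lambda>t. x t $ 3 \<le> clearance (x t) * D_max / p) at_top"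
    using eventually_ge_at_top[of 0] by eventually_elim (rule C_le)
  show ?thesis by (rule tendsto_sandwich[OF C_lower C_upper tendsto_const C_bound])
qed

lemma E1_attracts:
  assumes R: "R\<^sub>0 > 1" and \<theta>: "\<theta> > 0" "\<theta> * (p - kC) \<le> p" "p * I1 \<le> \<theta> * kC * \<epsilon>"
    and sol: "is_solution f x" and x0: "x 0 \<in> \<Omega>" and I0: "x 0 $ 2 > 0"
  shows "(x \<longlongrightarrow> equilibrium S1 I1) at_top"
proof -
  note in_\<Omega> = solution_in_Omega[OF sol x0]
  have I1: "I1 > 0" using R I1_pos_iff by simp
  have I_pos: "x t $ 2 > 0" if "t \<ge> 0" for t using infected_pos[OF sol x0 I0 that] .
  have D: "((\<lambda>t. lyapunov_deriv S1 I1 \<theta> (x t)) \<longlongrightarrow> 0) at_top"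
  proof (rule lyapunov_deriv_tendsto_0[OF sol x0 S1_pos])
    fix v assume v: "v \<in> \<Omega>" "v$1 > 0" "v$2 > 0 \<or> I1 = 0"
    then have "- ((\<mu> + c * I1) * (v$1 - S1)^2 / v$1) \<le> 0" using I1 pos by simp
    then show "lyapunov_deriv S1 I1 \<theta> v \<le> 0" using lyapunov_deriv_E1_le[OF R \<theta> v(1,2)] v(3) I1 by auto
  qed (use I1 \<theta> I0 in auto)
  have S: "((\<lambda>t. x t $ 1) \<longlongrightarrow> S1) at_top"
  proof (rule susceptible_tendsto_if_lyapunov_deriv_tendsto_0[OF sol x0 _ D])
    show "\<mu> + c * I1 > 0" using I1 pos by (simp add: add_pos_pos)
    fix t :: real assume t: "t \<ge> 1"
    then have "x t $ 1 > 0" using susceptible_ge_S_min[OF sol x0 t] S_min_pos by linarith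
    then show "lyapunov_deriv S1 I1 \<theta> (x t) \<le> - ((\<mu> + c * I1) * (x t $ 1 - S1)^2 / x t $ 1)"
      using lyapunov_deriv_E1_le[OF R \<theta> in_\<Omega>[of t] _ I_pos[of t]] t by simp
  qed
  have "(\<alpha> - \<mu> * S1) / (c * S1) = I1"
    using pos S1_pos by (subst alpha_at_E1) (simp add: field_simps)
  then have I: "((\<lambda>t. x t $ 2) \<longlongrightarrow> I1) at_top"
    using infected_tendsto_if_susceptible_tendsto[OF sol x0 S S1_pos] by simp
  have dI: "((\<lambda>t. f (x t) $ 2) \<longlongrightarrow> 0) at_top"
    using derivative_tendsto_0_if_uniformly_continuous[OF _ solution_nth_deriv[OF sol] I
        uniformly_continuous_on_f_nth_solution[OF sol x0]] by simp
  have "((\<lambda>t. c * x t $ 1 - \<gamma> - \<mu> - f (x t) $ 2 / x t $ 2) \<longlongrightarrow> c * S1 - \<gamma> - \<mu> - 0 / I1) at_top"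
    using S I dI I1 by (intro tendsto_intros) auto
  moreover have "c * S1 - \<gamma> - \<mu> - 0 / I1 = 0" using gamma_at_E1 by simp
  moreover have "eventually (\<lambda>t. c * x t $ 1 - \<gamma> - \<mu> - f (x t) $ 2 / x t $ 2 = clearance (x t)) at_top"
    using eventually_ge_at_top[of 0]
  proof eventually_elim
    case (elim t)
    then show ?case using I_pos[OF elim] by (simp add: f_nth)
  qed
  ultimately have clearance: "((\<lambda>t. clearance (x t)) \<longlongrightarrow> 0) at_top"
    using Lim_transform_eventually by fastforce
  then have C: "((\<lambda>t. x t $ 3) \<longlongrightarrow> 0) at_top" by (rule C_tendsto_0_if_clearance_tendsto_0[OF sol x0])
  show ?thesis by (rule tendsto_equilibrium_if_SIC[OF sol S I C])
qed

subsection \<open>Stability and instability\<close>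

definition K_M where "K_M = 1 + m / (q + \<mu>)"
definition K_R where "K_R = K_M + (q * K_M + \<gamma>) / \<mu>"

lemma K_M_ge_1: "K_M \<ge> 1" using pos by (simp add: K_M_def)

lemma K_M_le_K_R: "K_M \<le> K_R"
  using pos K_M_ge_1 by (simp add: K_R_def)

text \<open>Once \<open>C\<close> and \<open>I\<close> stay \<open>\<rho>\<close>-close to the equilibrium values, the linear equations for
  \<open>M\<close> and \<open>R\<close> keep these components \<open>O(\<rho>)\<close>-close as well.\<close>

lemma memory_recovered_bounds:
  assumes sol: "is_solution f x" and x0: "x 0 \<in> \<Omega>" and \<rho>: "\<rho> \<ge> 0"
    and C: "\<And>t. t \<ge> 0 \<Longrightarrow> x t $ 3 \<le> \<rho>" and I: "\<And>t. t \<ge> 0 \<Longrightarrow> \<bar>x t $ 2 - i\<bar> \<le> \<rho>"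
    and M0: "x 0 $ 4 \<le> \<rho>" and R0: "\<bar>x 0 $ 5 - \<gamma> * i / \<mu>\<bar> \<le> \<rho>" and t: "t \<ge> 0"
  shows "x t $ 4 \<le> K_M * \<rho>" and "\<bar>x t $ 5 - \<gamma> * i / \<mu>\<bar> \<le> K_R * \<rho>"
proof -
  note deriv = solution_nth_deriv[OF sol]
  have bounds: "m * \<rho> / (q + \<mu>) \<le> K_M * \<rho>" "\<rho> \<le> K_M * \<rho>"
    using pos \<rho> K_M_ge_1 by (auto simp: K_M_def field_simps)
  have M: "x u $ 4 \<le> K_M * \<rho>" if u: "u \<ge> 0" for u
  proof -
    have "x u $ 4 \<le> max (x 0 $ 4) (m * \<rho> / (q + \<mu>))"
    proof (rule le_max_if_derivative_le_linear[OF _ deriv])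
      fix v :: real assume v: "v \<ge> 0"
      have "m * x v $ 3 \<le> m * \<rho>" using C[OF v] pos by (intro mult_left_mono) auto
      then show "f (x v) $ 4 \<le> m * \<rho> - (q + \<mu>) * x v $ 4" by (simp add: f_nth)
    qed (use u pos in auto)
    then show ?thesis using M0 bounds unfolding le_max_iff_disj by linarith
  qed
  then show "x t $ 4 \<le> K_M * \<rho>" using t .
  have lower: "x t $ 5 \<ge> min (x 0 $ 5) (\<gamma> * (i - \<rho>) / \<mu>)"
  proof (rule ge_min_if_derivative_ge_linear[OF _ deriv])
    fix u :: real assume u: "u \<ge> 0"
    have "q * x u $ 4 \<ge> 0" using Omega_nth_bounds(1)[OF solution_in_Omega[OF sol x0 u], of 4] pos by simp
    moreover have "\<gamma> * x u $ 2 \<ge> \<gamma> * (i - \<rho>)" using I[OF u] pos by (intro mult_left_mono) (auto simp: abs_le_iff)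
    ultimately show "f (x u) $ 5 \<ge> \<gamma> * (i - \<rho>) - \<mu> * x u $ 5" by (simp add: f_nth)
  qed (use t pos in auto)
  have upper: "x t $ 5 \<le> max (x 0 $ 5) ((q * (K_M * \<rho>) + \<gamma> * (i + \<rho>)) / \<mu>)"
  proof (rule le_max_if_derivative_le_linear[OF _ deriv])
    fix u :: real assume u: "u \<ge> 0"
    have "q * x u $ 4 \<le> q * (K_M * \<rho>)" using M[OF u] pos by (intro mult_left_mono) auto
    moreover have "\<gamma> * x u $ 2 \<le> \<gamma> * (i + \<rho>)" using I[OF u] pos by (intro mult_left_mono) (auto simp: abs_le_iff)
    ultimately show "f (x u) $ 5 \<le> q * (K_M * \<rho>) + \<gamma> * (i + \<rho>) - \<mu> * x u $ 5" by (simp add: f_nth)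
  qed (use t pos in auto)
  have "\<gamma> * (i - \<rho>) / \<mu> = \<gamma> * i / \<mu> - \<gamma> * \<rho> / \<mu>"
    "(q * (K_M * \<rho>) + \<gamma> * (i + \<rho>)) / \<mu> = \<gamma> * i / \<mu> + (K_R - K_M) * \<rho>"
    using pos by (simp_all add: K_R_def field_simps)
  moreover have "\<gamma> * \<rho> / \<mu> \<le> K_R * \<rho>" "(K_R - K_M) * \<rho> \<le> K_R * \<rho>" "\<rho> \<le> K_R * \<rho>"
  proof -
    have "(q * K_M + \<gamma>) / \<mu> = q * K_M / \<mu> + \<gamma> / \<mu>" by (simp add: add_divide_distrib)
    moreover have "q * K_M / \<mu> \<ge> 0" "\<gamma> / \<mu> \<ge> 0" using pos K_M_ge_1 by simp_all
    ultimately have "\<gamma> / \<mu> \<le> K_R" "K_R - K_M \<le> K_R" "1 \<le> K_R"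
      using K_M_ge_1 unfolding K_R_def by linarith+
    then have "\<gamma> / \<mu> * \<rho> \<le> K_R * \<rho>" "(K_R - K_M) * \<rho> \<le> K_R * \<rho>" "1 * \<rho> \<le> K_R * \<rho>"
      using \<rho> by (intro mult_right_mono; simp)+
    then show "\<gamma> * \<rho> / \<mu> \<le> K_R * \<rho>" "(K_R - K_M) * \<rho> \<le> K_R * \<rho>" "\<rho> \<le> K_R * \<rho>"
      by simp_all
  qed
  ultimately show "\<bar>x t $ 5 - \<gamma> * i / \<mu>\<bar> \<le> K_R * \<rho>"
    using lower upper R0 \<rho> K_M_le_K_R K_M_ge_1 unfolding min_le_iff_disj le_max_iff_disj abs_le_iff
    by (smt (verit) mult_right_mono)
qed

lemma stable_if_SIC_controlled:
  assumes control: "\<And>\<rho>. \<rho> > 0 \<Longrightarrow> \<exists>\<delta>>0. \<forall>x. is_solution f x \<and> x 0 \<in> \<Omega> \<and> dist (x 0) (equilibrium s i) < \<delta> \<longrightarrow>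
        (\<forall>t\<ge>0. \<bar>x t $ 1 - s\<bar> < \<rho> \<and> \<bar>x t $ 2 - i\<bar> < \<rho> \<and> x t $ 3 < \<rho>)"
  shows "stable_in f \<Omega> (equilibrium s i)"
  unfolding stable_in_def
proof (intro allI impI)
  fix \<eta> :: real assume \<eta>: "\<eta> > 0"
  let ?E = "equilibrium s i"
  define \<rho> where "\<rho> = \<eta> / (5 * K_R)"
  have K_R: "K_R \<ge> 1" using K_M_ge_1 K_M_le_K_R by linarith
  have \<rho>: "\<rho> > 0" "K_R * \<rho> = \<eta> / 5" "\<rho> \<le> \<eta> / 5"
    using \<eta> K_R by (auto simp: \<rho>_def field_simps)
  obtain \<delta> where \<delta>: "\<delta> > 0" "\<forall>x. is_solution f x \<and> x 0 \<in> \<Omega> \<and> dist (x 0) ?E < \<delta> \<longrightarrow>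
      (\<forall>t\<ge>0. \<bar>x t $ 1 - s\<bar> < \<rho> \<and> \<bar>x t $ 2 - i\<bar> < \<rho> \<and> x t $ 3 < \<rho>)"
    using control[OF \<rho>(1)] by blast
  show "\<exists>\<delta>>0. \<forall>x. is_solution f x \<and> x 0 \<in> \<Omega> \<and> dist (x 0) ?E < \<delta> \<longrightarrow> (\<forall>t\<ge>0. dist (x t) ?E < \<eta>)"
  proof (intro exI[of _ "min \<delta> \<rho>"] conjI allI impI)
    show "min \<delta> \<rho> > 0" using \<delta> \<rho> by simp
    fix x t assume x: "is_solution f x \<and> x 0 \<in> \<Omega> \<and> dist (x 0) ?E < min \<delta> \<rho>" and t: "(t::real) \<ge> 0"
    then have sol: "is_solution f x" and x0: "x 0 \<in> \<Omega>" by auto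
    have SIC: "\<forall>t\<ge>0. \<bar>x t $ 1 - s\<bar> < \<rho> \<and> \<bar>x t $ 2 - i\<bar> < \<rho> \<and> x t $ 3 < \<rho>" using \<delta>(2) x by auto
    have M0: "x 0 $ 4 \<le> \<rho>" and R0: "\<bar>x 0 $ 5 - \<gamma> * i / \<mu>\<bar> \<le> \<rho>"
      using abs_nth_diff_le_dist[of "x 0" 4 ?E] abs_nth_diff_le_dist[of "x 0" 5 ?E] x
      by (auto simp: equilibrium_def)
    have "x u $ 3 \<le> \<rho>" "\<bar>x u $ 2 - i\<bar> \<le> \<rho>" if "u \<ge> 0" for u
      using SIC that by auto
    note MR = memory_recovered_bounds[OF sol x0 less_imp_le[OF \<rho>(1)] this M0 R0 t]
    have "K_M * \<rho> \<le> K_R * \<rho>" using K_M_le_K_R \<rho>(1) by (intro mult_right_mono) auto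
    then have MR: "x t $ 4 \<le> \<eta> / 5" "\<bar>x t $ 5 - \<gamma> * i / \<mu>\<bar> \<le> \<eta> / 5"
      using MR \<rho>(2) by linarith+
    have "dist (x t) ?E \<le> \<bar>x t $ 1 - s\<bar> + \<bar>x t $ 2 - i\<bar> + \<bar>x t $ 3\<bar> + \<bar>x t $ 4\<bar> + \<bar>x t $ 5 - \<gamma> * i / \<mu>\<bar>"
      using norm_le_l1_5[of "x t - ?E"] by (simp add: dist_norm equilibrium_def)
    also have "\<dots> < \<eta>"
    proof -
      have "0 \<le> x t $ 3" "0 \<le> x t $ 4" using Omega_nth_bounds(1)[OF solution_in_Omega[OF sol x0 t]] by auto
      then show ?thesis using SIC[rule_format, OF t] MR \<rho>(3) by simp
    qed
    finally show "dist (x t) ?E < \<eta>" .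
  qed
qed

definition lyapunov_level :: "real \<Rightarrow> real \<Rightarrow> real \<Rightarrow> real \<Rightarrow> real" where
  "lyapunov_level s i \<theta> \<rho> = min (\<rho>^2 / (2 * max s N)) (min (\<rho>^2 / (2 * max i N)) (\<theta> * \<rho>))"

lemma lyapunov_level_pos: "s \<ge> 0 \<Longrightarrow> i \<ge> 0 \<Longrightarrow> \<theta> > 0 \<Longrightarrow> \<rho> > 0 \<Longrightarrow> lyapunov_level s i \<theta> \<rho> > 0"
  using N_pos by (simp add: lyapunov_level_def less_max_iff_disj)

lemma SIC_near_if_lyapunov_small:
  assumes v: "v \<in> \<Omega>" "v$1 > 0" "v$2 > 0 \<or> i = 0" and s: "s > 0" and i: "i \<ge> 0" and \<theta>: "\<theta> > 0"
    and \<rho>: "\<rho> > 0" and small: "lyapunov s i \<theta> v < lyapunov_level s i \<theta> \<rho>"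
  shows "\<bar>v$1 - s\<bar> < \<rho>" "\<bar>v$2 - i\<bar> < \<rho>" "v$3 < \<rho>"
proof -
  have max: "max s N > 0" "max i N > 0" using N_pos by (auto simp: less_max_iff_disj)
  have bounds: "0 \<le> v$j" "v$j \<le> N" for j using Omega_nth_bounds[OF v(1)] by auto
  have "(v$1 - s)^2 / (2 * max s N) \<le> volterra s (v$1)"
    using volterra_ge_square[of s "v$1" N] s bounds v(2) N_pos by auto
  moreover have "(v$2 - i)^2 / (2 * max i N) \<le> volterra i (v$2)"
    using volterra_ge_square[of i "v$2" N] i bounds v(3) N_pos by auto
  moreover have "0 \<le> (v$1 - s)^2 / (2 * max s N)" "0 \<le> (v$2 - i)^2 / (2 * max i N)" "0 \<le> \<theta> * v$3"
    using max \<theta> bounds by auto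
  ultimately have "(v$1 - s)^2 / (2 * max s N) < \<rho>^2 / (2 * max s N)"
    "(v$2 - i)^2 / (2 * max i N) < \<rho>^2 / (2 * max i N)" "\<theta> * v$3 < \<theta> * \<rho>"
    using small unfolding lyapunov_def lyapunov_level_def by linarith+
  then have "(v$1 - s)^2 < \<rho>^2" "(v$2 - i)^2 < \<rho>^2" "v$3 < \<rho>"
    using max \<theta> by (simp_all add: divide_less_cancel)
  then show "\<bar>v$1 - s\<bar> < \<rho>" "\<bar>v$2 - i\<bar> < \<rho>" "v$3 < \<rho>"
    using power2_less_imp_less[of "\<bar>v$1 - s\<bar>" \<rho>] power2_less_imp_less[of "\<bar>v$2 - i\<bar>" \<rho>] \<rho> by simp_all
qed

lemma lyapunov_controls_SIC:
  assumes s: "s > 0" and i: "i \<ge> 0" and \<theta>: "\<theta> > 0" and \<rho>: "\<rho> > 0"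
    and nonpos: "\<And>v. v \<in> \<Omega> \<Longrightarrow> v$1 > 0 \<Longrightarrow> v$2 > 0 \<or> i = 0 \<Longrightarrow> lyapunov_deriv s i \<theta> v \<le> 0"
  shows "\<exists>\<delta>>0. \<forall>x. is_solution f x \<and> x 0 \<in> \<Omega> \<and> dist (x 0) (equilibrium s i) < \<delta> \<longrightarrow>
        (\<forall>t\<ge>0. \<bar>x t $ 1 - s\<bar> < \<rho> \<and> \<bar>x t $ 2 - i\<bar> < \<rho> \<and> x t $ 3 < \<rho>)"
proof -
  let ?E = "equilibrium s i"
  have cont: "isCont (\<lambda>v. volterra r (v $ j)) ?E" if "0 < ?E $ j \<or> r = 0" for r j
    using isCont_o2[OF isCont_vec_nth[OF continuous_ident] continuous_at_volterra[OF that]] .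
  have "isCont (\<lambda>v. volterra s (v$1)) ?E" "isCont (\<lambda>v. volterra i (v$2)) ?E"
    using cont[of 1 s] cont[of 2 i] s i by (auto simp: equilibrium_def order.order_iff_strict)
  then have "isCont (\<lambda>v. volterra s (v$1) + volterra i (v$2) + \<theta> * v$3) ?E"
    by (intro continuous_intros)
  then obtain \<delta>1 where \<delta>1: "\<delta>1 > 0"
    "\<And>v. dist v ?E < \<delta>1 \<Longrightarrow> lyapunov s i \<theta> v < lyapunov_level s i \<theta> \<rho>"
    using lyapunov_level_pos[of s i \<theta> \<rho>] s i \<theta> \<rho> unfolding continuous_at_eps_delta lyapunov_def[symmetric]
    by (metis dist_real_def abs_less_iff diff_zero lyapunov_equilibrium less_imp_le)
  define \<delta> where "\<delta> = min \<delta>1 (min s (if i = 0 then 1 else i))"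
  have "\<delta> > 0" using \<delta>1 s i by (simp add: \<delta>_def)
  moreover have "\<bar>x t $ 1 - s\<bar> < \<rho> \<and> \<bar>x t $ 2 - i\<bar> < \<rho> \<and> x t $ 3 < \<rho>"
    if sol: "is_solution f x" and x0: "x 0 \<in> \<Omega>" and near: "dist (x 0) ?E < \<delta>" and t: "t \<ge> 0" for x t
  proof -
    have "\<bar>x 0 $ 1 - s\<bar> < s" "i > 0 \<Longrightarrow> \<bar>x 0 $ 2 - i\<bar> < i"
      using abs_nth_diff_le_dist[of "x 0" 1 ?E] abs_nth_diff_le_dist[of "x 0" 2 ?E] near
      by (auto simp: \<delta>_def equilibrium_def)
    then have S: "x u $ 1 > 0" and I: "x u $ 2 > 0 \<or> i = 0" if "u \<ge> 0" for u
      using susceptible_pos[OF sol x0 _ that] infected_pos[OF sol x0 _ that] i by (auto simp: abs_less_iff)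
    have "lyapunov s i \<theta> (x t) \<le> lyapunov s i \<theta> (x 0)"
      by (rule lyapunov_antimono[OF sol x0 order.refl S I nonpos]) (use t in auto)
    also have "\<dots> < lyapunov_level s i \<theta> \<rho>" using \<delta>1(2) near by (simp add: \<delta>_def)
    finally show ?thesis
      using SIC_near_if_lyapunov_small[OF solution_in_Omega[OF sol x0 t] S[OF t] I[OF t] s i \<theta> \<rho>]
      by blast
  qed
  ultimately show ?thesis by blast
qed

lemma E0_stable:
  assumes R: "R\<^sub>0 \<le> 1"
  shows "stable_in f \<Omega> (equilibrium N 0)"
proof (rule stable_if_SIC_controlled, rule lyapunov_controls_SIC[OF N_pos order.refl zero_less_one])
  fix v assume v: "v \<in> \<Omega>" "v$1 > 0"
  have "\<mu> * (v$1 - N)^2 / v$1 \<ge> 0" "kC * v$3 \<ge> 0" using v Omega_nth_bounds(1)[OF v(1), of 3] pos by auto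
  then show "lyapunov_deriv N 0 1 v \<le> 0" using lyapunov_deriv_E0_le[OF R v] by linarith
qed

lemma E1_stable:
  assumes R: "R\<^sub>0 > 1" and \<theta>: "\<theta> > 0" "\<theta> * (p - kC) \<le> p" "p * I1 \<le> \<theta> * kC * \<epsilon>"
  shows "stable_in f \<Omega> (equilibrium S1 I1)"
proof (rule stable_if_SIC_controlled, rule lyapunov_controls_SIC[OF S1_pos _ \<theta>(1)])
  show "I1 \<ge> 0" using R I1_pos_iff by simp
  fix v assume v: "v \<in> \<Omega>" "v$1 > 0" "v$2 > 0 \<or> I1 = 0"
  have "(\<mu> + c * I1) * (v$1 - S1)^2 / v$1 \<ge> 0" using v \<open>I1 \<ge> 0\<close> pos by simp
  then show "lyapunov_deriv S1 I1 \<theta> v \<le> 0"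
    using lyapunov_deriv_E1_le[OF R \<theta> v(1,2)] v(3) R I1_pos_iff by auto
qed

lemma unstable_if_component_repelled:
  assumes E: "E $ j = 0" and e: "e > 0" and \<kappa>: "\<kappa> > 0"
    and repelled: "\<And>v. v \<in> \<Omega> \<Longrightarrow> dist v E < e \<Longrightarrow> f v $ j \<ge> \<kappa> * v $ j"
    and approx: "\<And>\<delta>. \<delta> > 0 \<Longrightarrow> \<exists>v\<in>\<Omega>. dist v E < \<delta> \<and> v $ j > 0"
  shows "unstable_in f \<Omega> E"
  unfolding unstable_in_def stable_in_def
proof
  assume "\<forall>\<epsilon>>0. \<exists>\<delta>>0. \<forall>x. is_solution f x \<and> x 0 \<in> \<Omega> \<and> dist (x 0) E < \<delta> \<longrightarrow> (\<forall>t\<ge>0. dist (x t) E < \<epsilon>)"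
  then obtain \<delta> where \<delta>: "\<delta> > 0"
    "\<forall>x. is_solution f x \<and> x 0 \<in> \<Omega> \<and> dist (x 0) E < \<delta> \<longrightarrow> (\<forall>t\<ge>0. dist (x t) E < e)"
    using e by blast
  obtain v where v: "v \<in> \<Omega>" "dist v E < \<delta>" "v $ j > 0" using approx[OF \<delta>(1)] by blast
  obtain x where sol: "is_solution f x" and x0: "x 0 = v" using solution_exists[OF v(1)] by blast
  have near: "dist (x t) E < e" if "t \<ge> 0" for t using \<delta>(2) sol x0 v that by auto
  have "\<exists>t\<ge>0. x t $ j > e"
  proof (rule exceeds_if_exponential_growth[OF solution_nth_deriv[OF sol] _ \<kappa>])
    show "f (x t) $ j \<ge> \<kappa> * x t $ j" if "t \<ge> 0" for t
      using repelled[OF solution_in_Omega[OF sol _ that] near[OF that]] x0 v by simp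
  qed (use x0 v in auto)
  then obtain t where "t \<ge> 0" "x t $ j > e" by blast
  moreover have "x t $ j \<le> dist (x t) E" using abs_nth_diff_le_dist[of "x t" j E] E by simp
  ultimately show False using near by fastforce
qed

lemma infected_grows_near_E0:
  assumes R: "R\<^sub>0 > 1"
  shows "\<exists>e>0. \<exists>\<kappa>>0. \<forall>v\<in>\<Omega>. dist v (equilibrium N 0) < e \<longrightarrow> f v $ 2 \<ge> \<kappa> * v $ 2"
proof -
  define \<kappa> where "\<kappa> = c * N - \<gamma> - \<mu>"
  have "c * \<alpha> / (\<mu> * (\<mu> + \<gamma>)) > 1" using R by (simp add: R0_def)
  then have "c * \<alpha> > \<mu> * (\<mu> + \<gamma>)" using pos by (simp add: less_divide_eq)
  then have "\<mu> + \<gamma> < c * \<alpha> / \<mu>" using pos by (simp add: pos_less_divide_eq mult.commute)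
  then have \<kappa>_pos: "\<kappa> > 0" by (simp add: \<kappa>_def)
  define e where "e = \<kappa> / (2 * (c + p / \<epsilon>))"
  have cp: "c + p / \<epsilon> > 0" using pos by (simp add: add_pos_pos)
  have "e * (c + p / \<epsilon>) = \<kappa> / 2"
    using cp unfolding e_def
    by (metis (no_types) divide_divide_eq_left nonzero_eq_divide_eq not_less_iff_gr_or_eq times_divide_eq_left)
  then have "c * e + p * e / \<epsilon> = \<kappa> / 2" by (simp add: algebra_simps)
  moreover have "e > 0" unfolding e_def using \<kappa>_pos cp by (intro divide_pos_pos) auto
  ultimately have e: "e > 0" "c * e + p * e / \<epsilon> = \<kappa> / 2" by simp_all
  have "f v $ 2 \<ge> \<kappa> / 2 * v $ 2" if v: "v \<in> \<Omega>" "dist v (equilibrium N 0) < e" for v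
  proof -
    have "\<bar>v$1 - N\<bar> < e" "v$3 < e"
      using abs_nth_diff_le_dist[of v 1 "equilibrium N 0"] abs_nth_diff_le_dist[of v 3 "equilibrium N 0"] v
      by (auto simp: equilibrium_def)
    then have "c * (N - e) \<le> c * v$1" and cl: "clearance v \<le> p * e / \<epsilon>"
      using pos denominator_ge[OF v(1)] Omega_nth_bounds(1)[OF v(1), of 3]
      by (auto simp: clearance_def abs_less_iff intro!: frac_le mult_left_mono)
    then have "c * N - c * e \<le> c * v$1" by (simp add: right_diff_distrib)
    then have "c * v$1 - clearance v - \<gamma> - \<mu> \<ge> \<kappa> / 2" using cl e(2) \<kappa>_def by linarith
    then have "v$2 * (\<kappa> / 2) \<le> v$2 * (c * v$1 - clearance v - \<gamma> - \<mu>)"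
      using Omega_nth_bounds(1)[OF v(1), of 2] by (rule mult_left_mono)
    then show "f v $ 2 \<ge> \<kappa> / 2 * v $ 2" by (simp add: f_nth mult.commute)
  qed
  moreover have "\<kappa> / 2 > 0" using \<kappa>_pos by simp
  ultimately show ?thesis using e(1) by blast
qed

lemma E0_unstable:
  assumes R: "R\<^sub>0 > 1"
  shows "unstable_in f \<Omega> (equilibrium N 0)"
proof -
  obtain e \<kappa> where "e > 0" "\<kappa> > 0" "\<forall>v\<in>\<Omega>. dist v (equilibrium N 0) < e \<longrightarrow> f v $ 2 \<ge> \<kappa> * v $ 2"
    using infected_grows_near_E0[OF R] by blast
  then show ?thesis
  proof (intro unstable_if_component_repelled[of _ 2 e \<kappa>])
    fix \<delta> :: real assume "\<delta> > 0"
    define d where "d = min (\<delta>/3) (N/2)"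
    have d: "d > 0" "d \<le> \<delta>/3" "d \<le> N/2" using \<open>\<delta> > 0\<close> N_pos by (auto simp: d_def)
    have "mk5 (N - d) d 0 0 0 \<in> \<Omega>" using d by (simp add: Omega_iff)
    moreover have "dist (mk5 (N - d) d 0 0 0) (equilibrium N 0) < \<delta>"
      using dist_mk5_le[of "N - d" d 0 0 0 N 0 0 0 0] d by (simp add: equilibrium_def)
    ultimately show "\<exists>v\<in>\<Omega>. dist v (equilibrium N 0) < \<delta> \<and> v $ 2 > 0" using d by force
  qed (auto simp: equilibrium_def)
qed

lemma S1_I1_R1_sum: "S1 + I1 + \<gamma> * I1 / \<mu> = N"
proof -
  have "S1 + I1 + \<gamma> * I1 / \<mu> = (\<mu> + \<gamma>) * R\<^sub>0 / c" using pos by (simp add: S1_def I1_def field_simps)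
  also have "\<dots> = N"
  proof -
    have "\<gamma> * (\<mu> * c) + \<mu> * (\<mu> * c) > 0" using pos by (simp add: add_pos_pos)
    then show ?thesis using pos by (simp add: R0_def field_simps)
  qed
  finally show ?thesis .
qed

text \<open>Above the threshold the per-capita growth rate \<open>p I / (\<epsilon> + I + a M) - (m + d + \<mu>)\<close> of
  \<open>C\<close> is positive at \<open>E1\<close>, hence, by continuity, also nearby.\<close>

lemma C_grows_near_E1:
  assumes pk: "p > kC" and I1_large: "I1 > \<epsilon> * kC / (p - kC)"
  shows "\<exists>e>0. \<exists>\<kappa>>0. \<forall>v\<in>\<Omega>. dist v (equilibrium S1 I1) < e \<longrightarrow> f v $ 3 \<ge> \<kappa> * v $ 3"
proof -
  have I1: "I1 > 0" using I1_large pk pos by (smt (verit) divide_pos_pos mult_pos_pos)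
  define \<psi> where "\<psi> e = p * (I1 - e) / (\<epsilon> + I1 + (1 + a) * e)" for e
  define \<kappa> where "\<kappa> = \<psi> 0 - kC"
  have "(p - kC) * I1 > \<epsilon> * kC" using I1_large pk by (simp add: divide_less_eq mult.commute)
  then have "p * I1 / (\<epsilon> + I1) > kC" using pos I1 by (simp add: less_divide_eq algebra_simps)
  then have \<kappa>_pos: "\<kappa> > 0" by (simp add: \<kappa>_def \<psi>_def)
  have "isCont \<psi> 0" unfolding \<psi>_def using pos I1 by (intro continuous_intros) auto
  then obtain e1 where e1: "e1 > 0" "\<And>e. \<bar>e\<bar> < e1 \<Longrightarrow> \<bar>\<psi> e - \<psi> 0\<bar> < \<kappa> / 2"
    using \<kappa>_pos unfolding continuous_at_eps_delta by (metis dist_real_def diff_zero half_gt_zero)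
  define e where "e = min (e1 / 2) (I1 / 2)"
  have e: "e > 0" "e < e1" "e \<le> I1 / 2" using e1 I1 by (auto simp: e_def)
  have "\<bar>\<psi> e - \<psi> 0\<bar> < \<kappa> / 2" using e1(2)[of e] e by simp
  then have "- (\<psi> e - \<psi> 0) < \<kappa> / 2" using abs_less_iff by blast
  moreover have "\<psi> 0 = kC + \<kappa>" by (simp add: \<kappa>_def)
  ultimately have \<psi>_e: "\<psi> e \<ge> kC + \<kappa> / 2" by linarith
  have "f v $ 3 \<ge> \<kappa> / 2 * v $ 3" if v: "v \<in> \<Omega>" "dist v (equilibrium S1 I1) < e" for v
  proof -
    have "\<bar>v$2 - I1\<bar> < e" "v$4 < e"
      using abs_nth_diff_le_dist[of v 2 "equilibrium S1 I1"] abs_nth_diff_le_dist[of v 4 "equilibrium S1 I1"] v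
      by (auto simp: equilibrium_def)
    moreover have "a * v$4 < a * e" using \<open>v$4 < e\<close> pos by simp
    ultimately have I_lower: "v$2 \<ge> I1 - e" and D_upper: "\<epsilon> + v$2 + a * v$4 \<le> \<epsilon> + I1 + (1 + a) * e"
      by (auto simp: abs_less_iff algebra_simps)
    have D_pos: "\<epsilon> + v$2 + a * v$4 > 0" using denominator_ge[OF v(1)] pos by linarith
    have "\<psi> e \<le> p * (I1 - e) / (\<epsilon> + v$2 + a * v$4)"
      unfolding \<psi>_def using D_upper D_pos e pos by (intro divide_left_mono mult_nonneg_nonneg) auto
    also have "\<dots> \<le> p * v$2 / (\<epsilon> + v$2 + a * v$4)"
      using I_lower D_pos pos by (intro divide_right_mono mult_left_mono) auto
    finally have "p * v$2 / (\<epsilon> + v$2 + a * v$4) - kC \<ge> \<kappa> / 2" using \<psi>_e by linarith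
    then have "v$3 * (\<kappa> / 2) \<le> v$3 * (p * v$2 / (\<epsilon> + v$2 + a * v$4) - kC)"
      using Omega_nth_bounds(1)[OF v(1), of 3] by (rule mult_left_mono)
    moreover have "f v $ 3 = v$3 * (p * v$2 / (\<epsilon> + v$2 + a * v$4) - kC)"
      using D_pos by (simp add: f_nth clearance_def field_simps)
    ultimately show "f v $ 3 \<ge> \<kappa> / 2 * v $ 3" by (simp add: mult.commute)
  qed
  moreover have "\<kappa> / 2 > 0" using \<kappa>_pos by simp
  ultimately show ?thesis using e(1) by blast
qed

lemma E1_unstable:
  assumes pk: "p > kC" and I1_large: "I1 > \<epsilon> * kC / (p - kC)"
  shows "unstable_in f \<Omega> (equilibrium S1 I1)"
proof -
  have I1: "I1 > 0" using I1_large pk pos by (smt (verit) divide_pos_pos mult_pos_pos)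
  obtain e \<kappa> where "e > 0" "\<kappa> > 0" "\<forall>v\<in>\<Omega>. dist v (equilibrium S1 I1) < e \<longrightarrow> f v $ 3 \<ge> \<kappa> * v $ 3"
    using C_grows_near_E1[OF assms] by blast
  then show ?thesis
  proof (intro unstable_if_component_repelled[of _ 3 e \<kappa>])
    fix \<delta> :: real assume "\<delta> > 0"
    define d where "d = min (\<delta>/3) (S1/2)"
    have d: "d > 0" "d \<le> \<delta>/3" "d \<le> S1/2" using \<open>\<delta> > 0\<close> S1_pos by (auto simp: d_def)
    let ?v = "mk5 (S1 - d) I1 d 0 (\<gamma> * I1 / \<mu>)"
    have "?v \<in> \<Omega>" using d I1 pos S1_I1_R1_sum by (simp add: Omega_iff)
    moreover have "dist ?v (equilibrium S1 I1) < \<delta>"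
      using dist_mk5_le[of "S1 - d" I1 d 0 "\<gamma> * I1 / \<mu>" S1 I1 0 0 "\<gamma> * I1 / \<mu>"] d
      by (simp add: equilibrium_def)
    ultimately show "\<exists>v\<in>\<Omega>. dist v (equilibrium S1 I1) < \<delta> \<and> v $ 3 > 0" using d by force
  qed (auto simp: equilibrium_def)
qed

lemma E0_globally_asymptotically_stable:
  assumes "R\<^sub>0 \<le> 1"
  shows "globally_asymptotically_stable_in f \<Omega> (E0 \<alpha> \<mu>)"
  using E0_stable[OF assms] E0_attracts[OF assms]
  unfolding globally_asymptotically_stable_in_def locally_asymptotically_stable_in_def E0_eq_equilibrium
  by (blast intro: zero_less_one)

lemma E1_asymptotically_stable:
  assumes R: "R\<^sub>0 > 1" and \<theta>: "\<theta> > 0" "\<theta> * (p - kC) \<le> p" "p * I1 \<le> \<theta> * kC * \<epsilon>"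
  shows "locally_asymptotically_stable_in f \<Omega> (E1 \<alpha> c \<mu> \<gamma>)
    \<and> (\<forall>x. is_solution f x \<and> x 0 \<in> \<Omega> \<and> x 0 $ 2 > 0 \<longrightarrow> (x \<longlongrightarrow> E1 \<alpha> c \<mu> \<gamma>) at_top)"
proof -
  have I1: "I1 > 0" using R I1_pos_iff by simp
  have "x 0 $ 2 > 0" if "dist (x 0) (equilibrium S1 I1) < I1" for x
    using abs_nth_diff_le_dist[of "x 0" 2 "equilibrium S1 I1"] that by (auto simp: equilibrium_def)
  then show ?thesis
    using E1_stable[OF R \<theta>] E1_attracts[OF R \<theta>] I1
    unfolding locally_asymptotically_stable_in_def E1_eq_equilibrium by blast
qed

lemma E1_asymptotically_stable_below_threshold:
  assumes R: "R\<^sub>0 > 1" and p: "p < kC \<or> (p > kC \<and> I1 \<le> \<epsilon> * kC / (p - kC))"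
  shows "locally_asymptotically_stable_in f \<Omega> (E1 \<alpha> c \<mu> \<gamma>)
    \<and> (\<forall>x. is_solution f x \<and> x 0 \<in> \<Omega> \<and> x 0 $ 2 > 0 \<longrightarrow> (x \<longlongrightarrow> E1 \<alpha> c \<mu> \<gamma>) at_top)"
  using p
proof
  assume "p < kC"
  define \<theta> where "\<theta> = max 1 (p * I1 / (kC * \<epsilon>))"
  have "\<theta> > 0" "\<theta> * (p - kC) \<le> p"
    using \<open>p < kC\<close> pos by (auto simp: \<theta>_def mult_pos_neg less_imp_le intro: order_trans[OF _ less_imp_le[OF pos(4)]])
  moreover have "p * I1 \<le> \<theta> * kC * \<epsilon>"
  proof -
    have "kC * \<epsilon> > 0" using pos by simp
    moreover have "p * I1 / (kC * \<epsilon>) \<le> \<theta>" by (simp add: \<theta>_def)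
    ultimately show ?thesis by (simp add: divide_le_eq mult.assoc)
  qed
  ultimately show ?thesis using E1_asymptotically_stable[OF R] by blast
next
  assume p: "p > kC \<and> I1 \<le> \<epsilon> * kC / (p - kC)"
  define \<theta> where "\<theta> = p / (p - kC)"
  have "\<theta> > 0" "\<theta> * (p - kC) \<le> p" using p pos by (simp_all add: \<theta>_def)
  moreover have "p * I1 \<le> p * (\<epsilon> * kC / (p - kC))" using p pos by (intro mult_left_mono) auto
  then have "p * I1 \<le> \<theta> * kC * \<epsilon>" by (simp add: \<theta>_def field_simps)
  ultimately show ?thesis using E1_asymptotically_stable[OF R] by blast
qed

lemma I1_threshold:
  assumes "p \<noteq> kC"
  shows "\<mu> / c * (\<epsilon> * bb a m d \<mu> p * c / (a * \<mu>)) = \<epsilon> * kC / (p - kC)"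
proof -
  have "bb a m d \<mu> p = a * kC / (p - kC)" by (simp add: bb_def diff_diff_eq)
  moreover have "\<mu> / c * (\<epsilon> * (a * K / w) * c / (a * \<mu>)) = \<epsilon> * K / w" if "w \<noteq> 0" for K w
    using that pos by (simp add: field_simps)
  ultimately show ?thesis using assms by simp
qed

lemma R0_vs_threshold:
  assumes "p \<noteq> kC"
  shows "R\<^sub>0 \<le> 1 + \<epsilon> * bb a m d \<mu> p * c / (a * \<mu>) \<longleftrightarrow> I1 \<le> \<epsilon> * kC / (p - kC)"
    and "R\<^sub>0 > 1 + \<epsilon> * bb a m d \<mu> p * c / (a * \<mu>) \<longleftrightarrow> I1 > \<epsilon> * kC / (p - kC)"
proof -
  have "\<mu> / c > 0" using pos by simp
  note threshold = I1_threshold[OF assms, symmetric] and I1 = I1_def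
  have "I1 \<le> \<epsilon> * kC / (p - kC) \<longleftrightarrow> R\<^sub>0 - 1 \<le> \<epsilon> * bb a m d \<mu> p * c / (a * \<mu>)"
    unfolding I1 threshold by (rule mult_le_cancel_left_pos[OF \<open>\<mu> / c > 0\<close>])
  moreover have "I1 > \<epsilon> * kC / (p - kC) \<longleftrightarrow> R\<^sub>0 - 1 > \<epsilon> * bb a m d \<mu> p * c / (a * \<mu>)"
    unfolding I1 threshold by (rule mult_less_cancel_left_pos[OF \<open>\<mu> / c > 0\<close>])
  ultimately show "R\<^sub>0 \<le> 1 + \<epsilon> * bb a m d \<mu> p * c / (a * \<mu>) \<longleftrightarrow> I1 \<le> \<epsilon> * kC / (p - kC)"
    "R\<^sub>0 > 1 + \<epsilon> * bb a m d \<mu> p * c / (a * \<mu>) \<longleftrightarrow> I1 > \<epsilon> * kC / (p - kC)" by linarith+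
qed

lemma threshold_lt_1: "p < kC \<Longrightarrow> 1 + \<epsilon> * bb a m d \<mu> p * c / (a * \<mu>) < 1"
  using pos by (simp add: bb_def divide_pos_neg mult_neg_pos divide_neg_pos)

end

theorem theorem2:
  fixes \<alpha> c \<mu> p \<epsilon> a \<gamma> m d q :: real
  assumes pos: "\<alpha> > 0" "c > 0" "\<mu> > 0" "p > 0" "\<epsilon> > 0" "a > 0" "\<gamma> > 0" "m > 0" "d > 0" "q > 0"
  defines "f \<equiv> sicmr \<alpha> c \<mu> p \<epsilon> a \<gamma> m d q"
      and "\<Omega> \<equiv> Omega \<alpha> \<mu>"
      and "\<R> \<equiv> R0 \<alpha> c \<mu> \<gamma>"
      and "b \<equiv> bb a m d \<mu> p"
  shows
    "(\<R> \<le> 1 \<longrightarrow> globally_asymptotically_stable_in f \<Omega> (E0 \<alpha> \<mu>)) \<and>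
     (\<R> > 1 \<longrightarrow> unstable_in f \<Omega> (E0 \<alpha> \<mu>)) \<and>
     (p < m+d+\<mu> \<and> 1 < \<R> \<and> \<R> < 1 + \<epsilon>*b*c/(a*\<mu>) \<longrightarrow> unstable_in f \<Omega> (E1 \<alpha> c \<mu> \<gamma>)) \<and>
     (p < m+d+\<mu> \<and> \<R> > 1 \<and> \<R> \<ge> 1 + \<epsilon>*b*c/(a*\<mu>) \<longrightarrow>
        locally_asymptotically_stable_in f \<Omega> (E1 \<alpha> c \<mu> \<gamma>) \<and>
        (\<forall>x. is_solution f x \<and> x 0 \<in> \<Omega> \<and> x 0 $ 2 > 0 \<longrightarrow> (x \<longlongrightarrow> E1 \<alpha> c \<mu> \<gamma>) at_top)) \<and>
     (p > m+d+\<mu> \<and> 1 < \<R> \<and> \<R> \<le> 1 + \<epsilon>*b*c/(a*\<mu>) \<longrightarrow>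
        locally_asymptotically_stable_in f \<Omega> (E1 \<alpha> c \<mu> \<gamma>) \<and>
        (\<forall>x. is_solution f x \<and> x 0 \<in> \<Omega> \<and> x 0 $ 2 > 0 \<longrightarrow> (x \<longlongrightarrow> E1 \<alpha> c \<mu> \<gamma>) at_top)) \<and>
     (p > m+d+\<mu> \<and> \<R> > 1 + \<epsilon>*b*c/(a*\<mu>) \<longrightarrow> unstable_in f \<Omega> (E1 \<alpha> c \<mu> \<gamma>))"
proof -
  interpret sicmr_model \<alpha> c \<mu> p \<epsilon> a \<gamma> m d q using pos by unfold_locales
  have defs: "f = sicmr \<alpha> c \<mu> p \<epsilon> a \<gamma> m d q" "\<Omega> = Omega \<alpha> \<mu>" "\<R> = R\<^sub>0" "b = bb a m d \<mu> p"
    unfolding f_def \<Omega>_def \<R>_def b_def by (rule refl)+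
  show ?thesis
  proof (intro conjI impI)
    show "globally_asymptotically_stable_in f \<Omega> (E0 \<alpha> \<mu>)" if "\<R> \<le> 1"
      using E0_globally_asymptotically_stable that unfolding defs .
    show "unstable_in f \<Omega> (E0 \<alpha> \<mu>)" if "\<R> > 1"
      using E0_unstable that unfolding defs by (simp add: E0_eq_equilibrium)
    show "unstable_in f \<Omega> (E1 \<alpha> c \<mu> \<gamma>)" if "p < m+d+\<mu> \<and> 1 < \<R> \<and> \<R> < 1 + \<epsilon>*b*c/(a*\<mu>)"
      using that threshold_lt_1 unfolding defs by auto
  next
    assume "p < m+d+\<mu> \<and> \<R> > 1 \<and> \<R> \<ge> 1 + \<epsilon>*b*c/(a*\<mu>)"
    then show "locally_asymptotically_stable_in f \<Omega> (E1 \<alpha> c \<mu> \<gamma>)"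
      and "\<forall>x. is_solution f x \<and> x 0 \<in> \<Omega> \<and> x 0 $ 2 > 0 \<longrightarrow> (x \<longlongrightarrow> E1 \<alpha> c \<mu> \<gamma>) at_top"
      using E1_asymptotically_stable_below_threshold unfolding defs by auto
  next
    assume "p > m+d+\<mu> \<and> 1 < \<R> \<and> \<R> \<le> 1 + \<epsilon>*b*c/(a*\<mu>)"
    then show "locally_asymptotically_stable_in f \<Omega> (E1 \<alpha> c \<mu> \<gamma>)"
      and "\<forall>x. is_solution f x \<and> x 0 \<in> \<Omega> \<and> x 0 $ 2 > 0 \<longrightarrow> (x \<longlongrightarrow> E1 \<alpha> c \<mu> \<gamma>) at_top"
      using E1_asymptotically_stable_below_threshold R0_vs_threshold(1) unfolding defs by auto
  next
    assume "p > m+d+\<mu> \<and> \<R> > 1 + \<epsilon>*b*c/(a*\<mu>)"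
    then show "unstable_in f \<Omega> (E1 \<alpha> c \<mu> \<gamma>)"
      using E1_unstable R0_vs_threshold(2) unfolding defs by (auto simp: E1_eq_equilibrium)
  qed
qed

end
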